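(* Let $\pi\in\mathcal S_n$, $\eta\in\mathcal S_d$, $M\in\mathbb{C}_{\mathrm{Biso}}(\pi,\eta)$, $p,h\in[0,1]$ with $h>0$, $\sigma>0$, $\delta\in(0,1)$, and $\tilde Y$ generated as in the model below with parameter $\mu$. Let $(E_1,\dots,E_r)$ be a partition of $[n]$ and $v\in\{0,1\}^r$ such that (i) $v_s=1\Rightarrow\lambda_1|E_s|>4\rho^2/h^2$, and (ii) if $v_s=v_{s'}=1$ with $s<s'$ then $\pi(i)<\pi(i')$ for all $i\in E_s$, $i'\in E_{s'}$. For each $s$ with $v_s=1$ let $Q_s$ be the envelope defined below. Then with probability at least $1-\frac{\delta}{12\lceil\log_2(n\vee d)\rceil(n\vee d)^{1/2}}$, \[ \sum_{s:\,v_s=1}|Q_s|\leq 3d\qquad\text{and}\qquad Q^*(E_s)\subseteq Q_s\ \text{ for all } s \text{ with } v_s=1 . \]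
   Context: A matrix is bi-isotonic if non-increasing along rows and columns; $\mathbb{C}_{\mathrm{Biso}}(\pi,\eta)$ is the set of $M\in[0,1]^{n\times d}$ with $(M_{\pi^{-1}(i)\eta^{-1}(j)})_{ij}$ bi-isotonic. Model for $\tilde Y$: $N_{ij}$ i.i.d. $\mathrm{Poisson}(\mu)$, independent observations $\tilde Y_{i,j,k}=M_{ij}+W_{ijk}$ with $W_{ijk}$ independent centered $\sigma^2$-subGaussian ($\mathbb{E}e^{tW}\le e^{t^2\sigma^2/2}$), $\tilde Y_{ij}=\frac1{N_{ij}}\sum_{k\le N_{ij}}\tilde Y_{i,j,k}$ with $0/0=0$; $\lambda_1=1-e^{-\mu}$. Constants: $L=\log\big(24\,nd\,(n\vee d)^{1/2}\lceil\log_2(n\vee d)\rceil/\delta\big)$, $\rho=(1\vee\sigma)e\sqrt{8L}$. $Q^*(E)=\{j\in[d]:\ \max_{i\in E}M_{ij}\geq p+h,\ \min_{i\in E}M_{ij}\leq p-h\}$. Envelope of $E_s$ (with $v_s=1$): for $F\subseteq[n]$ write $\bar y_F(j)=\frac1{|F|}\sum_{i\in F}\tilde Y_{ij}$. If $s=\min\{t: v_t=1\}$ set $\underline Q=[d]$; else let $\underline s=\max\{t<s: v_t=1\}$ and $\underline Q=\{j\in[d]:\ \bar y_{E_{\underline s}}(j)\geq\lambda_1(p+h)-\rho\sqrt{\lambda_1/|E_{\underline s}|}\}$. If $s=\max\{t: v_t=1\}$ set $\overline Q=[d]$; else let $\overline s=\min\{t>s: v_t=1\}$ and $\overline Q=\{j\in[d]:\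 \bar y_{E_{\overline s}}(j)\leq\lambda_1(p-h)+\rho\sqrt{\lambda_1/|E_{\overline s}|}\}$. Then $Q_s=\underline Q\cap\overline Q$. *)

theory Defs
  imports "HOL-Probability.Probability" "HOL-Combinatorics.Permutations"
begin

text \<open>Index conventions: [n] = {..<n}, [d] = {..<d}; matrices are functions nat => nat => real.\<close>

definition bi_isotonic :: "nat \<Rightarrow> nat \<Rightarrow> (nat \<Rightarrow> nat \<Rightarrow> real) \<Rightarrow> bool" where
  "bi_isotonic n d B \<longleftrightarrow>
     (\<forall>i j j'. i < n \<and> j \<le> j' \<and> j' < d \<longrightarrow> B i j' \<le> B i j) \<and>
     (\<forall>i i' j. i \<le> i' \<and> i' < n \<and> j < d \<longrightarrow> B i' j \<le> B i j)"

definition C_Biso :: "nat \<Rightarrow> nat \<Rightarrow> (nat \<Rightarrow> nat) \<Rightarrow> (nat \<Rightarrow> nat) \<Rightarrow> (nat \<Rightarrow> nat \<Rightarrow> real) set" where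
  "C_Biso n d \<pi> \<eta> = {M. (\<forall>i<n. \<forall>j<d. 0 \<le> M i j \<and> M i j \<le> 1) \<and>
                         bi_isotonic n d (\<lambda>i j. M (inv \<pi> i) (inv \<eta> j))}"

definition Ytilde :: "(nat \<Rightarrow> nat \<Rightarrow> real) \<Rightarrow> (nat \<Rightarrow> nat \<Rightarrow> 'a \<Rightarrow> nat) \<Rightarrow>
    (nat \<Rightarrow> nat \<Rightarrow> nat \<Rightarrow> 'a \<Rightarrow> real) \<Rightarrow> nat \<Rightarrow> nat \<Rightarrow> 'a \<Rightarrow> real" where
  "Ytilde M N W i j \<omega> =
     (if N i j \<omega> = 0 then 0 else (\<Sum>k<N i j \<omega>. M i j + W i j k \<omega>) / real (N i j \<omega>))"

definition ybar :: "(nat \<Rightarrow> nat \<Rightarrow> 'a \<Rightarrow> real) \<Rightarrow> nat set \<Rightarrow> nat \<Rightarrow> 'a \<Rightarrow> real" where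
  "ybar Y F j \<omega> = (\<Sum>i\<in>F. Y i j \<omega>) / real (card F)"

definition Lconst :: "nat \<Rightarrow> nat \<Rightarrow> real \<Rightarrow> real" where
  "Lconst n d \<delta> = ln (24 * real n * real d * sqrt (real (max n d))
                       * real_of_int \<lceil>log 2 (real (max n d))\<rceil> / \<delta>)"

definition rho_const :: "real \<Rightarrow> nat \<Rightarrow> nat \<Rightarrow> real \<Rightarrow> real" where
  "rho_const \<sigma> n d \<delta> = max 1 \<sigma> * exp 1 * sqrt (8 * Lconst n d \<delta>)"

definition Qstar :: "nat \<Rightarrow> (nat \<Rightarrow> nat \<Rightarrow> real) \<Rightarrow> real \<Rightarrow> real \<Rightarrow> nat set \<Rightarrow> nat set" where
  "Qstar d M p h E = {j. j < d \<and> Max ((\<lambda>i. M i j) ` E) \<ge> p + h \<and> Min ((\<lambda>i. M i j) ` E) \<le> p - h}"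

definition envelope :: "nat \<Rightarrow> nat \<Rightarrow> (nat \<Rightarrow> bool) \<Rightarrow> (nat \<Rightarrow> nat set) \<Rightarrow>
    (nat \<Rightarrow> nat \<Rightarrow> 'a \<Rightarrow> real) \<Rightarrow> real \<Rightarrow> real \<Rightarrow> real \<Rightarrow> real \<Rightarrow> nat \<Rightarrow> 'a \<Rightarrow> nat set" where
  "envelope d r v E Y lam rho p h s \<omega> =
     (let Qlow = (if s = Min {t. t < r \<and> v t} then {..<d}
                  else (let su = Max {t. t < s \<and> v t} in
                        {j. j < d \<and> ybar Y (E su) j \<omega> \<ge> lam * (p + h) - rho * sqrt (lam / real (card (E su)))}));
          Qup = (if s = Max {t. t < r \<and> v t} then {..<d}
                  else (let so = Min {t. s < t \<and> t < r \<and> v t} in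
                        {j. j < d \<and> ybar Y (E so) j \<omega> \<le> lam * (p - h) + rho * sqrt (lam / real (card (E so)))}))
      in Qlow \<inter> Qup)"

end

theory Submission
  imports Defs
begin

text \<open>A single cell average is \<open>0\<close> with probability \<open>e\<^sup>-\<^sup>\<mu>\<close> and otherwise the mean of
  Poisson many \<open>\<sigma>\<^sup>2\<close>-sub-Gaussian observations of its entry, so its centred moment generating
  function is at most \<open>exp (2 \<lambda>\<^sub>1 max(1,\<sigma>)\<^sup>2 t\<^sup>2)\<close> for small \<open>t\<close>. The cells of a column are
  independent, hence a Chernoff bound and a union bound over the \<open>2 n d\<close> one-sided deviation events
  show that, with the required probability, every block mean of the averaged observations is within
  \<open>\<rho> \<surd>(\<lambda>\<^sub>1/|E\<^sub>s|)\<close> of \<open>\<lambda>\<^sub>1\<close> times the corresponding block mean of \<open>M\<close>.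

  On that event the claim is deterministic. Since \<open>M\<close> is bi-isotonic and the active blocks are
  ordered, a column of \<open>Q\<^sup>*(E\<^sub>s)\<close> has large entries in every earlier active block and small
  entries in every later one, so it passes both tests defining \<open>Q\<^sub>s\<close>. Conversely a column lies in
  at most two envelopes: for three of them, the block after the first would have column mean below
  \<open>p\<close> and the block before the third column mean above \<open>p\<close>, against monotonicity. Hence
  \<open>\<Sum>|Q\<^sub>s| \<le> 2d\<close>.\<close>

section \<open>Moment generating function of a single cell\<close>

lemma exp_le_1_plus_self_plus_sq:
  fixes x :: real
  assumes "x \<le> 1"
  shows "exp x \<le> 1 + x + x\<^sup>2"
proof (cases "0 \<le> x")
  case True
  then show ?thesis using exp_bound assms by blast
next
  case False
  define y where "y = - x"
  have y: "0 < y" using False y_def by simp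
  have "exp x = 1 / exp y" by (simp add: y_def exp_minus field_simps)
  also have "\<dots> \<le> 1 / (1 + y)" using y by (intro divide_left_mono) auto
  also have "\<dots> \<le> 1 - y + y\<^sup>2" using y by (simp add: field_simps power2_eq_square)
  finally show ?thesis by (simp add: y_def)
qed

lemma exp_quadratic_remainder_le:
  fixes t a \<sigma> s :: real
  assumes s: "1 \<le> s" "\<sigma> \<le> s" and sig: "0 < \<sigma>" and t: "\<bar>t\<bar> \<le> 1 / (4 * s)"
    and a: "0 \<le> a" "a \<le> 1"
  shows "exp (t * a + t\<^sup>2 * \<sigma>\<^sup>2 / 2) - 1 - t * a \<le> 2 * s\<^sup>2 * t\<^sup>2"
proof -
  define x where "x = t * a + t\<^sup>2 * \<sigma>\<^sup>2 / 2"
  have ts: "\<bar>t\<bar> * s \<le> 1/4" using t s by (simp add: field_simps)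
  have t_le: "\<bar>t\<bar> \<le> 1/4" using ts s by (smt (verit) abs_ge_zero mult_left_mono mult_cancel_left1)
  have tsig: "\<bar>t\<bar> * \<sigma> \<le> 1/4" using ts s sig by (smt (verit) abs_ge_zero mult_left_mono)
  have ta: "\<bar>t * a\<bar> \<le> \<bar>t\<bar>" using a by (simp add: abs_mult mult_left_le)
  have tsig_sq: "t\<^sup>2 * \<sigma>\<^sup>2 \<le> 1/16"
  proof -
    have "t\<^sup>2 * \<sigma>\<^sup>2 = (\<bar>t\<bar> * \<sigma>)\<^sup>2" by (simp add: power_mult_distrib)
    also have "\<dots> \<le> (1/4)\<^sup>2" using tsig sig by (intro power_mono) auto
    finally show ?thesis by (simp add: power2_eq_square)
  qed
  have "x \<le> 1" unfolding x_def using ta t_le tsig_sq by linarith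
  then have exp_x: "exp x \<le> 1 + x + x\<^sup>2" by (rule exp_le_1_plus_self_plus_sq)
  have abs_x: "\<bar>x\<bar> \<le> \<bar>t\<bar> * (9/8 * s)"
  proof -
    have "\<bar>t\<bar> * \<sigma>\<^sup>2 = (\<bar>t\<bar> * \<sigma>) * \<sigma>" by (simp add: power2_eq_square)
    also have "\<dots> \<le> 1/4 * s" using tsig s sig by (intro mult_mono) auto
    finally have tsig_sq': "\<bar>t\<bar> * \<sigma>\<^sup>2 \<le> s / 4" by simp
    have "\<bar>x\<bar> \<le> \<bar>t * a\<bar> + t\<^sup>2 * \<sigma>\<^sup>2 / 2"
      unfolding x_def by (simp add: abs_triangle_ineq[THEN order_trans])
    also have "t\<^sup>2 * \<sigma>\<^sup>2 / 2 = \<bar>t\<bar> * (\<bar>t\<bar> * \<sigma>\<^sup>2 / 2)" by (simp add: power2_eq_square)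
    also have "\<dots> \<le> \<bar>t\<bar> * (s / 8)" using tsig_sq' by (intro mult_left_mono) auto
    moreover have "\<bar>t\<bar> \<le> s * \<bar>t\<bar>" using s by (simp add: mult_right_mono[of 1 s, simplified])
    ultimately show ?thesis using ta by (simp add: algebra_simps)
  qed
  have x_sq: "x\<^sup>2 \<le> 81/64 * (s\<^sup>2 * t\<^sup>2)"
  proof -
    have "x\<^sup>2 = \<bar>x\<bar>\<^sup>2" by simp
    also have "\<dots> \<le> (\<bar>t\<bar> * (9/8 * s))\<^sup>2" using abs_x by (intro power_mono) auto
    also have "\<dots> = 81/64 * (s\<^sup>2 * t\<^sup>2)" by (simp add: power_mult_distrib power_divide)
    finally show ?thesis .
  qed
  have sig_sq: "t\<^sup>2 * \<sigma>\<^sup>2 \<le> s\<^sup>2 * t\<^sup>2"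
    using s sig by (subst mult.commute) (intro mult_right_mono power_mono, auto)
  show "exp (t * a + t\<^sup>2 * \<sigma>\<^sup>2 / 2) - 1 - t * a \<le> 2 * s\<^sup>2 * t\<^sup>2"
  proof -
    have "x\<^sup>2 + t\<^sup>2 * \<sigma>\<^sup>2 / 2 \<le> 2 * (s\<^sup>2 * t\<^sup>2)"
      using x_sq sig_sq zero_le_power2[of "s * t"] unfolding power_mult_distrib by linarith
    moreover have "x - t * a = t\<^sup>2 * \<sigma>\<^sup>2 / 2" unfolding x_def by simp
    ultimately show ?thesis using exp_x unfolding x_def by linarith
  qed
qed

text \<open>The left-hand side is the moment generating function of the centred cell average, which is
  \<open>0\<close> with probability \<open>1 - lam\<close> and otherwise \<open>\<sigma>\<^sup>2\<close>-sub-Gaussian around \<open>a\<close>.\<close>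

lemma thinned_mgf_le:
  fixes t a lam \<sigma> s :: real
  assumes s: "1 \<le> s" "\<sigma> \<le> s" and sig: "0 < \<sigma>" and t: "\<bar>t\<bar> \<le> 1 / (4 * s)"
    and a: "0 \<le> a" "a \<le> 1" and lam: "0 \<le> lam" "lam \<le> 1"
  shows "(1 - lam) * exp (- t * lam * a) + lam * exp (t * a * (1 - lam) + t\<^sup>2 * \<sigma>\<^sup>2 / 2)
         \<le> exp (2 * lam * s\<^sup>2 * t\<^sup>2)"
proof -
  define x where "x = t * a + t\<^sup>2 * \<sigma>\<^sup>2 / 2"
  have "(1 - lam) * exp (- t * lam * a) + lam * exp (t * a * (1 - lam) + t\<^sup>2 * \<sigma>\<^sup>2 / 2)
      = exp (- t * lam * a) * (1 + lam * (exp x - 1))"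
    unfolding x_def by (simp add: algebra_simps flip: exp_add)
  also have "\<dots> \<le> exp (- t * lam * a) * exp (lam * (exp x - 1))"
    by (intro mult_left_mono) (auto simp: exp_ge_add_one_self)
  also have "\<dots> = exp (lam * (exp x - 1 - t * a))" by (simp add: algebra_simps flip: exp_add)
  also have "\<dots> \<le> exp (lam * (2 * s\<^sup>2 * t\<^sup>2))"
    using exp_quadratic_remainder_le[OF s sig t a] lam unfolding x_def by (simp add: mult_left_mono)
  finally show ?thesis by (simp add: algebra_simps)
qed

lemma (in prob_space) subgaussian_mean_mgf_le:
  fixes W :: "nat \<Rightarrow> 'a \<Rightarrow> real"
  assumes Wint: "\<And>k u. integrable M (\<lambda>\<omega>. exp (u * W k \<omega>))"
    and Wsub: "\<And>k u. expectation (\<lambda>\<omega>. exp (u * W k \<omega>)) \<le> exp (u\<^sup>2 * \<sigma>\<^sup>2 / 2)"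
    and k: "0 < k"
  shows "(\<Prod>k'<k. expectation (\<lambda>\<omega>. exp (t / real k * W k' \<omega>))) \<le> exp (t\<^sup>2 * \<sigma>\<^sup>2 / 2)"
proof -
  have "(\<Prod>k'<k. expectation (\<lambda>\<omega>. exp (t / real k * W k' \<omega>))) \<le> (\<Prod>k'<k. exp ((t / real k)\<^sup>2 * \<sigma>\<^sup>2 / 2))"
    by (intro prod_mono conjI integral_nonneg_AE Wsub) auto
  also have "\<dots> = exp (real k * ((t / real k)\<^sup>2 * \<sigma>\<^sup>2 / 2))"
    by (simp only: prod_constant card_lessThan exp_of_nat_mult)
  also have "real k * ((t / real k)\<^sup>2 * \<sigma>\<^sup>2 / 2) = (t\<^sup>2 * \<sigma>\<^sup>2 / 2) / real k"
    using k by (simp add: power_divide power2_eq_square field_simps)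
  also have "\<dots> \<le> t\<^sup>2 * \<sigma>\<^sup>2 / 2"
    using k by (simp add: divide_le_eq mult_le_cancel_left1) (metis mult_nonneg_nonneg zero_le_power2 not_less)
  finally show ?thesis by simp
qed

text \<open>Conditionally on \<open>N = k\<close>, the mean of \<open>k\<close> independent sub-Gaussian noises is
  \<open>\<sigma>\<^sup>2/k\<close>-sub-Gaussian; since \<open>N\<close> is independent of the noises, the restriction to \<open>{N = k}\<close>
  just multiplies by its probability.\<close>

lemma (in prob_space) nn_integral_exp_mean_on_count_le:
  fixes Nc :: "'a \<Rightarrow> nat" and Wc :: "nat \<Rightarrow> 'a \<Rightarrow> real"
    and X :: "'b \<Rightarrow> 'a \<Rightarrow> real" and inl :: 'b and inr :: "nat \<Rightarrow> 'b"
  assumes Nm: "Nc \<in> measurable M (count_space UNIV)"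
    and Wm: "\<And>k. Wc k \<in> borel_measurable M"
    and Wint: "\<And>k u. integrable M (\<lambda>\<omega>. exp (u * Wc k \<omega>))"
    and Wsub: "\<And>k u. expectation (\<lambda>\<omega>. exp (u * Wc k \<omega>)) \<le> exp (u\<^sup>2 * \<sigma>\<^sup>2 / 2)"
    and ind: "indep_vars (\<lambda>_. borel) X (insert inl (range inr))"
    and inj: "inj inr" "inl \<notin> range inr"
    and XN: "X inl = (\<lambda>\<omega>. real (Nc \<omega>))" and XW: "\<And>k. X (inr k) = Wc k"
    and k: "0 < k"
  shows "(\<integral>\<^sup>+\<omega>. indicator {\<omega>. Nc \<omega> = k} \<omega> * ennreal (exp (\<Sum>k'<k. t / real k * Wc k' \<omega>)) \<partial>M)
     \<le> emeasure M {\<omega>\<in>space M. Nc \<omega> = k} * ennreal (exp (t\<^sup>2 * \<sigma>\<^sup>2 / 2))"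
proof -
  note [measurable] = Nm Wm
  have inr_ne_inl [simp]: "inr x \<noteq> inl" for x using inj(2) by (metis rangeI)
  define J where "J = insert inl (inr ` {..<k})"
  define Z where "Z x = (if x = inl then (\<lambda>r. indicator {real k} r :: ennreal)
                        else (\<lambda>r. ennreal (exp (t / real k * r))))" for x
  have indZ: "indep_vars (\<lambda>_. borel) (\<lambda>x \<omega>. Z x (X x \<omega>)) J"
    by (rule indep_vars_compose2[OF indep_vars_subset[OF ind]]) (auto simp: J_def Z_def)
  have prod_J: "(\<Prod>x\<in>J. f x) = f inl * (\<Prod>k'<k. f (inr k'))" for f :: "'b \<Rightarrow> ennreal"
    using inj unfolding J_def by (subst prod.insert) (auto simp: prod.reindex inj_on_def)
  have integrand: "indicator {\<omega>. Nc \<omega> = k} \<omega> * ennreal (exp (\<Sum>k'<k. t / real k * Wc k' \<omega>))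
      = (\<Prod>x\<in>J. Z x (X x \<omega>))" for \<omega>
    unfolding prod_J using inj
    by (simp add: Z_def XN XW indicator_def prod_ennreal exp_sum)
  have noise: "(\<integral>\<^sup>+\<omega>. Z (inr k') (X (inr k') \<omega>) \<partial>M) = ennreal (expectation (\<lambda>\<omega>. exp (t / real k * Wc k' \<omega>)))" for k'
  proof -
    have "(\<integral>\<^sup>+\<omega>. Z (inr k') (X (inr k') \<omega>) \<partial>M) = (\<integral>\<^sup>+\<omega>. ennreal (exp (t / real k * Wc k' \<omega>)) \<partial>M)"
      by (simp add: Z_def XW)
    also have "\<dots> = ennreal (expectation (\<lambda>\<omega>. exp (t / real k * Wc k' \<omega>)))"
      by (intro nn_integral_eq_integral Wint) auto
    finally show ?thesis .
  qed
  have count: "(\<integral>\<^sup>+\<omega>. Z inl (X inl \<omega>) \<partial>M) = emeasure M {\<omega>\<in>space M. Nc \<omega> = k}"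
  proof -
    have "(\<integral>\<^sup>+\<omega>. Z inl (X inl \<omega>) \<partial>M) = (\<integral>\<^sup>+\<omega>. indicator {\<omega>\<in>space M. Nc \<omega> = k} \<omega> \<partial>M)"
      by (intro nn_integral_cong) (auto simp: Z_def XN indicator_def)
    then show ?thesis by simp
  qed
  have "(\<integral>\<^sup>+\<omega>. indicator {\<omega>. Nc \<omega> = k} \<omega> * ennreal (exp (\<Sum>k'<k. t / real k * Wc k' \<omega>)) \<partial>M)
      = (\<Prod>x\<in>J. \<integral>\<^sup>+\<omega>. Z x (X x \<omega>) \<partial>M)"
    unfolding integrand by (rule indep_vars_nn_integral[OF _ indZ]) (auto simp: J_def)
  also have "\<dots> = emeasure M {\<omega>\<in>space M. Nc \<omega> = k}
                 * ennreal (\<Prod>k'<k. expectation (\<lambda>\<omega>. exp (t / real k * Wc k' \<omega>)))"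
    unfolding prod_J count noise by (simp add: prod_ennreal integral_nonneg_AE)
  also have "\<dots> \<le> emeasure M {\<omega>\<in>space M. Nc \<omega> = k} * ennreal (exp (t\<^sup>2 * \<sigma>\<^sup>2 / 2))"
    by (intro mult_left_mono ennreal_leI subgaussian_mean_mgf_le[OF Wint Wsub k]) auto
  finally show ?thesis .
qed

lemma nn_integral_poisson_zero_or_positive:
  fixes f :: "nat \<Rightarrow> real"
  assumes \<mu>: "0 < \<mu>" and f: "\<And>k. 0 \<le> f k" and const: "\<And>k. k \<noteq> 0 \<Longrightarrow> f k = f 1"
  shows "(\<integral>\<^sup>+k. ennreal (f k) \<partial>measure_pmf (poisson_pmf \<mu>))
         = ennreal (f 0 * exp (- \<mu>) + f 1 * (1 - exp (- \<mu>)))"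
proof -
  let ?P = "measure_pmf (poisson_pmf \<mu>)"
  have zero: "emeasure ?P {0} = ennreal (exp (- \<mu>))"
    by (simp add: emeasure_pmf_single pmf_poisson[OF \<mu>])
  have "measure ?P (UNIV - {0}) = 1 - measure ?P {0}"
    using measure_pmf.prob_compl[of "{0}" "poisson_pmf \<mu>"] by simp
  also have "\<dots> = 1 - exp (- \<mu>)" by (simp add: measure_pmf_single pmf_poisson[OF \<mu>])
  finally have positive: "emeasure ?P (UNIV - {0}) = ennreal (1 - exp (- \<mu>))"
    by (simp add: measure_pmf.emeasure_eq_measure)
  have "(\<integral>\<^sup>+k. ennreal (f k) \<partial>?P)
      = (\<integral>\<^sup>+k. ennreal (f 0) * indicator {0} k + ennreal (f 1) * indicator (UNIV - {0}) k \<partial>?P)"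
  proof (intro nn_integral_cong)
    fix k :: nat
    show "ennreal (f k) = ennreal (f 0) * indicator {0} k + ennreal (f 1) * indicator (UNIV - {0}) k"
      using const[of k] by (cases "k = 0") (auto simp: indicator_def)
  qed
  also have "\<dots> = ennreal (f 0) * emeasure ?P {0} + ennreal (f 1) * emeasure ?P (UNIV - {0})"
    by (subst nn_integral_add) (auto simp: nn_integral_cmult_indicator)
  finally show ?thesis
    unfolding zero positive using \<mu> f
    by (simp add: ennreal_mult'[symmetric] ennreal_plus[symmetric] del: ennreal_plus)
qed

definition cell_average :: "real \<Rightarrow> ('a \<Rightarrow> nat) \<Rightarrow> (nat \<Rightarrow> 'a \<Rightarrow> real) \<Rightarrow> 'a \<Rightarrow> real" where
  "cell_average a Nc Wc \<omega> = (if Nc \<omega> = 0 then 0 else (\<Sum>k<Nc \<omega>. a + Wc k \<omega>) / real (Nc \<omega>))"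

lemma Ytilde_eq_cell_average: "Ytilde A N W i j = cell_average (A i j) (N i j) (W i j)"
  by (simp add: fun_eq_iff Ytilde_def cell_average_def)

lemma borel_measurable_cell_average:
  assumes Nm [measurable]: "Nc \<in> measurable M (count_space UNIV)"
    and Wm [measurable]: "\<And>k. Wc k \<in> borel_measurable M"
  shows "cell_average a Nc Wc \<in> borel_measurable M"
proof -
  define f where "f m \<omega> = (if m = 0 then 0 else (\<Sum>k<m. a + Wc k \<omega>) / real (m::nat))" for m \<omega>
  have "f m \<in> borel_measurable M" for m unfolding f_def by measurable
  then have "(\<lambda>\<omega>. f (Nc \<omega>) \<omega>) \<in> borel_measurable M"
    by (rule measurable_compose_countable'[OF _ Nm]) auto
  then show ?thesis by (simp add: f_def cell_average_def[abs_def])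
qed

lemma (in prob_space) nn_integral_exp_cell_average_on_count_le:
  fixes Nc :: "'a \<Rightarrow> nat" and Wc :: "nat \<Rightarrow> 'a \<Rightarrow> real"
    and X :: "'b \<Rightarrow> 'a \<Rightarrow> real" and inl :: 'b and inr :: "nat \<Rightarrow> 'b"
  assumes Nm: "Nc \<in> measurable M (count_space UNIV)"
    and Wm: "\<And>k. Wc k \<in> borel_measurable M"
    and Wint: "\<And>k u. integrable M (\<lambda>\<omega>. exp (u * Wc k \<omega>))"
    and Wsub: "\<And>k u. expectation (\<lambda>\<omega>. exp (u * Wc k \<omega>)) \<le> exp (u\<^sup>2 * \<sigma>\<^sup>2 / 2)"
    and ind: "indep_vars (\<lambda>_. borel) X (insert inl (range inr))"
    and inj: "inj inr" "inl \<notin> range inr"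
    and XN: "X inl = (\<lambda>\<omega>. real (Nc \<omega>))" and XW: "\<And>k. X (inr k) = Wc k"
  shows "(\<integral>\<^sup>+\<omega>. indicator {\<omega>. Nc \<omega> = k} \<omega> * ennreal (exp (t * (cell_average a Nc Wc \<omega> - lam * a))) \<partial>M)
    \<le> emeasure M {\<omega>\<in>space M. Nc \<omega> = k}
        * ennreal (if k = 0 then exp (- t * lam * a) else exp (t * a * (1 - lam) + t\<^sup>2 * \<sigma>\<^sup>2 / 2))"
proof (cases "k = 0")
  case True
  note [measurable] = Nm
  have "(\<integral>\<^sup>+\<omega>. indicator {\<omega>. Nc \<omega> = k} \<omega> * ennreal (exp (t * (cell_average a Nc Wc \<omega> - lam * a))) \<partial>M)
      = (\<integral>\<^sup>+\<omega>. ennreal (exp (- t * lam * a)) * indicator {\<omega>\<in>space M. Nc \<omega> = k} \<omega> \<partial>M)"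
    using True by (intro nn_integral_cong) (auto simp: cell_average_def indicator_def)
  also have "\<dots> = ennreal (exp (- t * lam * a)) * emeasure M {\<omega>\<in>space M. Nc \<omega> = k}"
    by (intro nn_integral_cmult_indicator) measurable
  finally show ?thesis using True by (simp add: mult.commute)
next
  case False
  note [measurable] = Nm Wm
  have "indicator {\<omega>. Nc \<omega> = k} \<omega> * ennreal (exp (t * (cell_average a Nc Wc \<omega> - lam * a)))
      = ennreal (exp (t * a * (1 - lam)))
        * (indicator {\<omega>. Nc \<omega> = k} \<omega> * ennreal (exp (\<Sum>k'<k. t / real k * Wc k' \<omega>)))" for \<omega>
  proof (cases "Nc \<omega> = k")
    case True
    with False have "t * (cell_average a Nc Wc \<omega> - lam * a) = t * a * (1 - lam) + (\<Sum>k'<k. t / real k * Wc k' \<omega>)"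
      by (simp add: cell_average_def sum.distrib sum_divide_distrib[symmetric] sum_distrib_left[symmetric]
          field_simps)
    then show ?thesis by (simp add: True exp_add ennreal_mult')
  qed simp
  then have "(\<integral>\<^sup>+\<omega>. indicator {\<omega>. Nc \<omega> = k} \<omega> * ennreal (exp (t * (cell_average a Nc Wc \<omega> - lam * a))) \<partial>M)
      = ennreal (exp (t * a * (1 - lam)))
        * (\<integral>\<^sup>+\<omega>. indicator {\<omega>. Nc \<omega> = k} \<omega> * ennreal (exp (\<Sum>k'<k. t / real k * Wc k' \<omega>)) \<partial>M)"
    by (simp only:) (rule nn_integral_cmult, measurable)
  also have "\<dots> \<le> ennreal (exp (t * a * (1 - lam)))
        * (emeasure M {\<omega>\<in>space M. Nc \<omega> = k} * ennreal (exp (t\<^sup>2 * \<sigma>\<^sup>2 / 2)))"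
    using False
    by (intro mult_left_mono nn_integral_exp_mean_on_count_le[OF Nm Wm Wint Wsub ind inj XN XW]) auto
  finally show ?thesis
    using False by (simp add: exp_add ennreal_mult' mult_ac)
qed

lemma (in prob_space) cell_average_mgf_le:
  fixes Nc :: "'a \<Rightarrow> nat" and Wc :: "nat \<Rightarrow> 'a \<Rightarrow> real"
    and X :: "'b \<Rightarrow> 'a \<Rightarrow> real" and inl :: 'b and inr :: "nat \<Rightarrow> 'b"
  assumes Nm: "Nc \<in> measurable M (count_space UNIV)"
    and Np: "distr M (count_space UNIV) Nc = measure_pmf (poisson_pmf \<mu>)"
    and Wm: "\<And>k. Wc k \<in> borel_measurable M"
    and Wint: "\<And>k u. integrable M (\<lambda>\<omega>. exp (u * Wc k \<omega>))"
    and Wsub: "\<And>k u. expectation (\<lambda>\<omega>. exp (u * Wc k \<omega>)) \<le> exp (u\<^sup>2 * \<sigma>\<^sup>2 / 2)"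
    and ind: "indep_vars (\<lambda>_. borel) X (insert inl (range inr))"
    and inj: "inj inr" "inl \<notin> range inr"
    and XN: "X inl = (\<lambda>\<omega>. real (Nc \<omega>))" and XW: "\<And>k. X (inr k) = Wc k"
    and sig: "0 < \<sigma>" and mu: "0 < \<mu>" and a: "0 \<le> a" "a \<le> 1"
    and s: "1 \<le> s" "\<sigma> \<le> s" and t: "\<bar>t\<bar> \<le> 1 / (4 * s)"
  shows "(\<integral>\<^sup>+\<omega>. ennreal (exp (t * (cell_average a Nc Wc \<omega> - (1 - exp (- \<mu>)) * a))) \<partial>M)
          \<le> ennreal (exp (2 * (1 - exp (- \<mu>)) * s\<^sup>2 * t\<^sup>2))"
proof -
  note [measurable] = Nm Wm
  define lam where "lam = 1 - exp (- \<mu>)"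
  have lam: "0 \<le> lam" "lam \<le> 1" using mu by (auto simp: lam_def)
  define f where "f \<omega> = ennreal (exp (t * (cell_average a Nc Wc \<omega> - lam * a)))" for \<omega>
  define h where "h k = (if k = 0 then exp (- t * lam * a) else exp (t * a * (1 - lam) + t\<^sup>2 * \<sigma>\<^sup>2 / 2))"
    for k :: nat
  have [measurable]: "f \<in> borel_measurable M"
    unfolding f_def using borel_measurable_cell_average[OF Nm Wm] by measurable
  have count_prob: "emeasure M {\<omega>\<in>space M. Nc \<omega> = k} = ennreal (pmf (poisson_pmf \<mu>) k)" for k
  proof -
    have "emeasure M {\<omega>\<in>space M. Nc \<omega> = k} = emeasure (distr M (count_space UNIV) Nc) {k}"
      by (subst emeasure_distr) (auto intro!: arg_cong[where f="emeasure M"])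
    then show ?thesis by (simp add: Np emeasure_pmf_single)
  qed
  have split_count: "(\<Sum>k. indicator {\<omega>. Nc \<omega> = k} \<omega> * f \<omega>) = f \<omega>" for \<omega>
    by (subst suminf_finite[of "{Nc \<omega>}"]) auto
  have "(\<integral>\<^sup>+\<omega>. f \<omega> \<partial>M) = (\<integral>\<^sup>+\<omega>. (\<Sum>k. indicator {\<omega>. Nc \<omega> = k} \<omega> * f \<omega>) \<partial>M)"
    by (simp only: split_count)
  also have "\<dots> = (\<Sum>k. \<integral>\<^sup>+\<omega>. indicator {\<omega>. Nc \<omega> = k} \<omega> * f \<omega> \<partial>M)"
    by (rule nn_integral_suminf) measurable
  also have "\<dots> \<le> (\<Sum>k. ennreal (pmf (poisson_pmf \<mu>) k) * ennreal (h k))"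
    unfolding f_def h_def count_prob[symmetric]
    by (intro suminf_le nn_integral_exp_cell_average_on_count_le[OF Nm Wm Wint Wsub ind inj XN XW]) auto
  also have "\<dots> = (\<integral>\<^sup>+k. ennreal (h k) \<partial>measure_pmf (poisson_pmf \<mu>))"
    by (simp add: nn_integral_measure_pmf nn_integral_count_space_nat)
  also have "\<dots> = ennreal (h 0 * exp (- \<mu>) + h 1 * (1 - exp (- \<mu>)))"
    by (rule nn_integral_poisson_zero_or_positive[OF mu]) (auto simp: h_def)
  also have "h 0 * exp (- \<mu>) + h 1 * (1 - exp (- \<mu>))
      = (1 - lam) * exp (- t * lam * a) + lam * exp (t * a * (1 - lam) + t\<^sup>2 * \<sigma>\<^sup>2 / 2)"
    by (simp add: h_def lam_def)
  also have "\<dots> \<le> exp (2 * lam * s\<^sup>2 * t\<^sup>2)" by (rule thinned_mgf_le[OF s sig t a lam])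
  finally show ?thesis unfolding f_def lam_def by (simp add: ennreal_leI)
qed

section \<open>Concentration of the block averages\<close>

lemma (in prob_space) indep_sum_tail_le:
  fixes Z :: "'i \<Rightarrow> 'a \<Rightarrow> real"
  assumes fin: "finite I" and Zm: "\<And>i. i \<in> I \<Longrightarrow> Z i \<in> borel_measurable M"
    and ind: "indep_vars (\<lambda>_. borel) (\<lambda>i \<omega>. ennreal (exp (\<tau> * Z i \<omega>))) I"
    and \<tau>: "0 \<le> \<tau>"
    and mgf: "\<And>i. i \<in> I \<Longrightarrow> (\<integral>\<^sup>+\<omega>. ennreal (exp (\<tau> * Z i \<omega>)) \<partial>M) \<le> ennreal (exp b)"
  shows "emeasure M {\<omega>\<in>space M. \<theta> \<le> (\<Sum>i\<in>I. Z i \<omega>)} \<le> ennreal (exp (real (card I) * b - \<tau> * \<theta>))"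
proof -
  let ?S = "{\<omega>\<in>space M. \<theta> \<le> (\<Sum>i\<in>I. Z i \<omega>)}"
  have [measurable]: "Z i \<in> borel_measurable M" if "i \<in> I" for i using Zm that .
  have exp_sum: "ennreal (exp (- \<tau> * \<theta>)) * (\<Prod>i\<in>I. ennreal (exp (\<tau> * Z i \<omega>)))
      = ennreal (exp (\<tau> * (\<Sum>i\<in>I. Z i \<omega>) - \<tau> * \<theta>))" for \<omega>
    using fin by (simp add: prod_ennreal exp_sum[symmetric] sum_distrib_left exp_diff
        ennreal_mult'[symmetric] divide_inverse exp_minus mult.commute del: ennreal_mult')
  have "emeasure M ?S = (\<integral>\<^sup>+\<omega>. indicator ?S \<omega> \<partial>M)"
    by (simp add: fin)
  also have "\<dots> \<le> (\<integral>\<^sup>+\<omega>. ennreal (exp (- \<tau> * \<theta>)) * (\<Prod>i\<in>I. ennreal (exp (\<tau> * Z i \<omega>))) \<partial>M)"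
  proof (rule nn_integral_mono)
    fix \<omega>
    have "\<tau> * \<theta> \<le> \<tau> * (\<Sum>i\<in>I. Z i \<omega>)" if "\<omega> \<in> ?S" using that \<tau> by (intro mult_left_mono) auto
    then show "indicator ?S \<omega> \<le> ennreal (exp (- \<tau> * \<theta>)) * (\<Prod>i\<in>I. ennreal (exp (\<tau> * Z i \<omega>)))"
      unfolding exp_sum by (auto simp: indicator_def)
  qed
  also have "\<dots> = ennreal (exp (- \<tau> * \<theta>)) * (\<Prod>i\<in>I. \<integral>\<^sup>+\<omega>. ennreal (exp (\<tau> * Z i \<omega>)) \<partial>M)"
    using fin by (simp add: nn_integral_cmult indep_vars_nn_integral[OF fin ind])
  also have "\<dots> \<le> ennreal (exp (- \<tau> * \<theta>)) * (\<Prod>i\<in>I. ennreal (exp b))"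
    by (intro mult_left_mono prod_mono_ennreal mgf) auto
  also have "\<dots> = ennreal (exp (- \<tau> * \<theta>) * exp (real (card I) * b))"
    by (simp add: ennreal_power exp_of_nat_mult ennreal_mult')
  also have "\<dots> = ennreal (exp (real (card I) * b - \<tau> * \<theta>))"
    by (simp add: exp_add[symmetric])
  finally show ?thesis .
qed

text \<open>The Chernoff parameter \<open>\<tau> = \<rho> / (4 s\<^sup>2 \<surd>m)\<close> is small enough for the cell moment
  bound and yields the exponent \<open>-\<rho>\<^sup>2/(8 s\<^sup>2) = -e\<^sup>2 L\<close>.\<close>

lemma chernoff_parameter:
  fixes s L \<rho> m :: real
  assumes s: "1 \<le> s" and L: "0 < L" and \<rho>: "\<rho> = s * exp 1 * sqrt (8 * L)" and m: "4 * \<rho>\<^sup>2 \<le> m"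
  defines "\<tau> \<equiv> \<rho> / (4 * s\<^sup>2 * sqrt m)"
  shows "0 < \<tau>" "\<tau> \<le> 1 / (4 * s)" "m * (2 * s\<^sup>2 * \<tau>\<^sup>2) - \<tau> * (\<rho> * sqrt m) \<le> - L"
proof -
  have \<rho>_pos: "0 < \<rho>" using s L by (simp add: \<rho>)
  have "sqrt (4 * \<rho>\<^sup>2) \<le> sqrt m" using m by simp
  then have sqrt_m: "2 * \<rho> \<le> sqrt m" using \<rho>_pos by (simp add: real_sqrt_mult)
  then have m_pos: "0 < sqrt m" using \<rho>_pos by linarith
  show "0 < \<tau>" using \<rho>_pos s m_pos by (simp add: \<tau>_def)
  have "\<rho> \<le> s * sqrt m" using sqrt_m \<rho>_pos s m_pos by (smt (verit) mult_le_cancel_right1)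
  then have "\<rho> / (4 * s\<^sup>2 * sqrt m) \<le> (s * sqrt m) / (4 * s\<^sup>2 * sqrt m)"
    using s m_pos by (intro divide_right_mono) auto
  also have "\<dots> = 1 / (4 * s)" using s m_pos by (simp add: power2_eq_square field_simps)
  finally show "\<tau> \<le> 1 / (4 * s)" by (simp add: \<tau>_def)
  have "m * (2 * s\<^sup>2 * \<tau>\<^sup>2) - \<tau> * (\<rho> * sqrt m) = - (\<rho>\<^sup>2 / (8 * s\<^sup>2))"
    using m_pos s by (simp add: \<tau>_def power2_eq_square field_simps)
  moreover have "\<rho>\<^sup>2 / (8 * s\<^sup>2) = (exp 1)\<^sup>2 * L"
    using s L by (simp add: \<rho> power_mult_distrib)
  moreover have "L \<le> (exp 1)\<^sup>2 * L"
    using L exp_ge_add_one_self[of 1] by (simp add: power2_eq_square) (smt (verit) mult_le_cancel_right1 one_le_power)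
  ultimately show "m * (2 * s\<^sup>2 * \<tau>\<^sup>2) - \<tau> * (\<rho> * sqrt m) \<le> - L" by linarith
qed

lemma mult_sqrt_divide_self:
  fixes k x :: real
  assumes "0 < k"
  shows "k * sqrt (x / k) = sqrt (x * k)"
proof -
  have "sqrt (x * k) = sqrt (x / k * k\<^sup>2)" using assms by (simp add: power2_eq_square)
  also have "\<dots> = sqrt (x / k) * sqrt (k\<^sup>2)" by (rule real_sqrt_mult)
  also have "sqrt (k\<^sup>2) = k" using assms by simp
  finally show ?thesis by simp
qed

lemma (in prob_space) prob_ge_if_avoiding_bad_events:
  assumes fin: "finite I" and B: "\<And>x. x \<in> I \<Longrightarrow> B x \<in> events"
    and q: "\<And>x. x \<in> I \<Longrightarrow> prob (B x) \<le> q"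
    and G: "G \<in> events" and avoid: "space M - (\<Union>x\<in>I. B x) \<subseteq> G"
  shows "1 - real (card I) * q \<le> prob G"
proof -
  have bad: "(\<Union>x\<in>I. B x) \<in> events" using fin B by auto
  have "prob (\<Union>x\<in>I. B x) \<le> (\<Sum>x\<in>I. prob (B x))"
    using fin B by (intro finite_measure_subadditive_finite) auto
  also have "\<dots> \<le> real (card I) * q" using sum_mono[of I _ "\<lambda>_. q", OF q] by simp
  finally have "1 - real (card I) * q \<le> prob (space M - (\<Union>x\<in>I. B x))"
    using prob_compl[OF bad] by simp
  also have "\<dots> \<le> prob G" using avoid G by (intro finite_measure_mono)
  finally show ?thesis .
qed

lemma card_partition_le:
  fixes n r :: nat and E :: "nat \<Rightarrow> nat set"
  assumes nonempty: "\<And>s. s < r \<Longrightarrow> E s \<noteq> {}"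
    and disj: "\<And>s s'. s < r \<Longrightarrow> s' < r \<Longrightarrow> s \<noteq> s' \<Longrightarrow> E s \<inter> E s' = {}"
    and union: "(\<Union>s<r. E s) = {..<n}"
  shows "r \<le> n"
proof -
  define f where "f s = (SOME i. i \<in> E s)" for s
  have f: "f s \<in> E s" if "s < r" for s
    using nonempty[OF that] unfolding f_def by (simp add: some_in_eq)
  have "inj_on f {..<r}"
    using f disj by (intro inj_onI) (metis disjoint_iff lessThan_iff)
  moreover have "f ` {..<r} \<subseteq> {..<n}" using f union by blast
  ultimately have "card {..<r} \<le> card {..<n}" by (intro card_inj_on_le) auto
  then show ?thesis by simp
qed

lemma Lconst_pos_and_exp:
  assumes nd: "1 \<le> n" "1 \<le> d" "2 \<le> max n d" and \<delta>: "0 < \<delta>" "\<delta> < 1"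
  shows "0 < Lconst n d \<delta>"
    and "2 * real n * real d * exp (- Lconst n d \<delta>)
         = \<delta> / (12 * real_of_int \<lceil>log 2 (real (max n d))\<rceil> * sqrt (real (max n d)))"
proof -
  define c where "c = real_of_int \<lceil>log 2 (real (max n d))\<rceil>"
  define X where "X = 24 * real n * real d * sqrt (real (max n d)) * c / \<delta>"
  have "log 2 2 \<le> log 2 (real (max n d))" using nd by (subst log_le_cancel_iff) auto
  then have c: "1 \<le> c" unfolding c_def by simp
  have "1 * 1 * 1 * 1 \<le> real n * real d * sqrt (real (max n d)) * c"
    using nd c by (intro mult_mono) auto
  then have X: "1 < X" using \<delta> by (simp add: X_def less_divide_eq)
  have L: "Lconst n d \<delta> = ln X" by (simp add: Lconst_def X_def c_def)
  show "0 < Lconst n d \<delta>" using X by (simp add: L)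
  have "exp (- Lconst n d \<delta>) = 1 / X" using X by (simp add: L exp_minus inverse_eq_divide)
  then show "2 * real n * real d * exp (- Lconst n d \<delta>)
         = \<delta> / (12 * real_of_int \<lceil>log 2 (real (max n d))\<rceil> * sqrt (real (max n d)))"
    using nd c \<delta> by (simp add: X_def c_def[symmetric] field_simps)
qed

definition observation ::
    "(nat \<Rightarrow> nat \<Rightarrow> 'a \<Rightarrow> nat) \<Rightarrow> (nat \<Rightarrow> nat \<Rightarrow> nat \<Rightarrow> 'a \<Rightarrow> real)
     \<Rightarrow> (nat \<times> nat) + (nat \<times> nat \<times> nat) \<Rightarrow> 'a \<Rightarrow> real" where
  "observation N W = (\<lambda>x \<omega>. case x of Inl (i, j) \<Rightarrow> real (N i j \<omega>) | Inr (i, j, k) \<Rightarrow> W i j k \<omega>)"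

definition observation_index :: "nat \<Rightarrow> nat \<Rightarrow> ((nat \<times> nat) + (nat \<times> nat \<times> nat)) set" where
  "observation_index n d = {Inl (i, j) | i j. i < n \<and> j < d} \<union> {Inr (i, j, k) | i j k. i < n \<and> j < d}"

definition cell_index :: "nat \<Rightarrow> nat \<Rightarrow> ((nat \<times> nat) + (nat \<times> nat \<times> nat)) set" where
  "cell_index i j = insert (Inl (i, j)) (range (\<lambda>k. Inr (i, j, k)))"

lemma cell_index_subset: "i < n \<Longrightarrow> j < d \<Longrightarrow> cell_index i j \<subseteq> observation_index n d"
  by (auto simp: cell_index_def observation_index_def)

text \<open>Distinct rows of a column use disjoint sets of observations, hence give independent averages.\<close>

lemma (in prob_space) indep_vars_exp_Ytilde_column:
  fixes A :: "nat \<Rightarrow> nat \<Rightarrow> real" and N :: "nat \<Rightarrow> nat \<Rightarrow> 'a \<Rightarrow> nat"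
    and W :: "nat \<Rightarrow> nat \<Rightarrow> nat \<Rightarrow> 'a \<Rightarrow> real"
  assumes ind: "indep_vars (\<lambda>_. borel) (observation N W) (observation_index n d)"
    and E: "E \<subseteq> {..<n}" and j: "j < d"
  shows "indep_vars (\<lambda>_. borel) (\<lambda>i \<omega>. ennreal (exp (t * (Ytilde A N W i j \<omega> - lam * A i j)))) E"
proof -
  let ?C = "\<lambda>i. PiM (cell_index i j) (\<lambda>_. borel :: real measure)"
  have cells: "indep_vars ?C (\<lambda>i \<omega>. restrict (\<lambda>x. observation N W x \<omega>) (cell_index i j)) E"
    by (rule indep_vars_restrict[OF ind])
      (use E j in \<open>auto simp: disjoint_family_on_def cell_index_def observation_index_def\<close>)
  define f where "f i m y = (if m = 0 then 0 else (\<Sum>k<m. A i j + y (Inr (i, j, k))) / real (m::nat))"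
    for i m and y :: "(nat \<times> nat) + (nat \<times> nat \<times> nat) \<Rightarrow> real"
  \<comment> \<open>the count is read back from its real-valued embedding by \<open>nat \<lfloor>_\<rfloor>\<close>\<close>
  define F where "F i y = ennreal (exp (t * (f i (nat \<lfloor>y (Inl (i, j))\<rfloor>) y - lam * A i j)))" for i y
  have F_measurable: "F i \<in> measurable (?C i) borel" for i
  proof -
    have [measurable]: "(\<lambda>y. y x) \<in> borel_measurable (?C i)" if "x \<in> cell_index i j" for x
      using that by (rule measurable_component_singleton)
    have "f i m \<in> borel_measurable (?C i)" for m
      unfolding f_def by (measurable; simp add: cell_index_def)
    moreover have "(\<lambda>y. nat \<lfloor>y (Inl (i, j))\<rfloor>) \<in> measurable (?C i) (count_space UNIV)"
      by (measurable; simp add: cell_index_def)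
    ultimately have "(\<lambda>y. f i (nat \<lfloor>y (Inl (i, j))\<rfloor>) y) \<in> borel_measurable (?C i)"
      by (rule measurable_compose_countable') auto
    then show ?thesis unfolding F_def by measurable
  qed
  have "indep_vars (\<lambda>_. borel) (\<lambda>i \<omega>. F i (restrict (\<lambda>x. observation N W x \<omega>) (cell_index i j))) E"
    by (rule indep_vars_compose2[OF cells F_measurable])
  moreover have "(\<lambda>\<omega>. F i (restrict (\<lambda>x. observation N W x \<omega>) (cell_index i j)))
      = (\<lambda>\<omega>. ennreal (exp (t * (Ytilde A N W i j \<omega> - lam * A i j))))" for i
    by (auto simp: F_def f_def cell_index_def observation_def Ytilde_def)
  ultimately show ?thesis by simp
qed

definition conf_radius :: "real \<Rightarrow> real \<Rightarrow> nat set \<Rightarrow> real" where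
  "conf_radius lam \<rho> F = \<rho> * sqrt (lam / real (card F))"

lemma borel_measurable_ybar:
  assumes "\<And>i. i \<in> F \<Longrightarrow> Y i j \<in> borel_measurable M"
  shows "ybar Y F j \<in> borel_measurable M"
  using assms unfolding ybar_def[abs_def] by measurable

lemma abs_ybar_diff_less_iff:
  assumes "0 < card F"
  shows "\<bar>ybar Y F j \<omega> - lam * (\<Sum>i\<in>F. A i) / real (card F)\<bar> < x
         \<longleftrightarrow> \<bar>\<Sum>i\<in>F. Y i j \<omega> - lam * A i\<bar> < real (card F) * x"
proof -
  define S where "S = (\<Sum>i\<in>F. Y i j \<omega> - lam * A i)"
  define c where "c = real (card F)"
  have c: "0 < c" using assms by (simp add: c_def)
  have "ybar Y F j \<omega> - lam * (\<Sum>i\<in>F. A i) / c = S / c"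
    by (simp add: S_def c_def ybar_def sum_subtractf sum_distrib_left diff_divide_distrib)
  moreover have "\<bar>S / c\<bar> = \<bar>S\<bar> / c" using c by simp
  moreover have "\<bar>S\<bar> / c < x \<longleftrightarrow> \<bar>S\<bar> < x * c" using c by (rule pos_divide_less_eq)
  ultimately show ?thesis unfolding S_def[symmetric] c_def[symmetric] by (simp only: mult.commute)
qed

locale poisson_observation_model = prob_space P for P :: "'a measure" +
  fixes n d :: nat and M :: "nat \<Rightarrow> nat \<Rightarrow> real"
    and N :: "nat \<Rightarrow> nat \<Rightarrow> 'a \<Rightarrow> nat" and W :: "nat \<Rightarrow> nat \<Rightarrow> nat \<Rightarrow> 'a \<Rightarrow> real"
    and \<mu> \<sigma> :: real
  assumes M_range: "\<And>i j. i < n \<Longrightarrow> j < d \<Longrightarrow> 0 \<le> M i j \<and> M i j \<le> 1"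
    and sig: "0 < \<sigma>" and mu: "0 < \<mu>"
    and N_meas: "\<And>i j. i < n \<Longrightarrow> j < d \<Longrightarrow> N i j \<in> measurable P (count_space UNIV)"
    and N_pois: "\<And>i j. i < n \<Longrightarrow> j < d \<Longrightarrow>
                  distr P (count_space UNIV) (N i j) = measure_pmf (poisson_pmf \<mu>)"
    and W_meas: "\<And>i j k. i < n \<Longrightarrow> j < d \<Longrightarrow> W i j k \<in> borel_measurable P"
    and W_mgf_int: "\<And>i j k t. i < n \<Longrightarrow> j < d \<Longrightarrow> integrable P (\<lambda>\<omega>. exp (t * W i j k \<omega>))"
    and W_subg: "\<And>i j k t. i < n \<Longrightarrow> j < d \<Longrightarrow>
                  expectation (\<lambda>\<omega>. exp (t * W i j k \<omega>)) \<le> exp (t\<^sup>2 * \<sigma>\<^sup>2 / 2)"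
    and indep_obs: "indep_vars (\<lambda>_. borel) (observation N W) (observation_index n d)"
begin

lemma Ytilde_measurable: "i < n \<Longrightarrow> j < d \<Longrightarrow> Ytilde M N W i j \<in> borel_measurable P"
  unfolding Ytilde_eq_cell_average by (intro borel_measurable_cell_average N_meas W_meas)

lemma Ytilde_mgf_le:
  assumes ij: "i < n" "j < d" and s: "1 \<le> s" "\<sigma> \<le> s" and t: "\<bar>t\<bar> \<le> 1 / (4 * s)"
  shows "(\<integral>\<^sup>+\<omega>. ennreal (exp (t * (Ytilde M N W i j \<omega> - (1 - exp (- \<mu>)) * M i j))) \<partial>P)
         \<le> ennreal (exp (2 * (1 - exp (- \<mu>)) * s\<^sup>2 * t\<^sup>2))"
proof -
  have indep_cell: "indep_vars (\<lambda>_. borel) (observation N W) (insert (Inl (i, j)) (range (\<lambda>k. Inr (i, j, k))))"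
    using indep_vars_subset[OF indep_obs cell_index_subset[OF ij]] by (simp add: cell_index_def)
  have inj: "inj (\<lambda>k. Inr (i, j, k))" "Inl (i, j) \<notin> range (\<lambda>k. Inr (i, j, k))"
    by (auto simp: inj_def)
  have obs: "observation N W (Inl (i, j)) = (\<lambda>\<omega>. real (N i j \<omega>))"
    "\<And>k. observation N W (Inr (i, j, k)) = W i j k"
    by (simp_all add: observation_def fun_eq_iff)
  show ?thesis
    unfolding Ytilde_eq_cell_average using M_range[OF ij]
    by (intro cell_average_mgf_le[OF N_meas[OF ij] N_pois[OF ij] W_meas[OF ij] W_mgf_int[OF ij]
          W_subg[OF ij] indep_cell inj obs sig mu _ _ s t]) auto
qed

lemma block_deviation_prob_le:
  assumes E: "E \<subseteq> {..<n}" "E \<noteq> {}" and j: "j < d"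
    and L: "0 < L" and \<rho>: "\<rho> = max 1 \<sigma> * exp 1 * sqrt (8 * L)"
    and big: "4 * \<rho>\<^sup>2 \<le> (1 - exp (- \<mu>)) * real (card E)" and c: "c = 1 \<or> c = -1"
  shows "prob {\<omega>\<in>space P. real (card E) * conf_radius (1 - exp (- \<mu>)) \<rho> E
            \<le> c * (\<Sum>i\<in>E. Ytilde M N W i j \<omega> - (1 - exp (- \<mu>)) * M i j)} \<le> exp (- L)"
proof -
  define lam where "lam = 1 - exp (- \<mu>)"
  define s where "s = max 1 \<sigma>"
  define m where "m = lam * real (card E)"
  define \<tau> where "\<tau> = \<rho> / (4 * s\<^sup>2 * sqrt m)"
  have s: "1 \<le> s" "\<sigma> \<le> s" by (simp_all add: s_def)
  note \<tau> = chernoff_parameter[OF s(1) L \<rho>[folded s_def] big[folded lam_def, folded m_def], folded \<tau>_def]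
  have iE: "i < n" if "i \<in> E" for i using that E by auto
  have fin: "finite E" using E finite_subset by blast
  have card_pos: "0 < real (card E)" using fin E by (simp add: card_gt_0_iff)
  define Z where "Z i \<omega> = c * (Ytilde M N W i j \<omega> - lam * M i j)" for i \<omega>
  have cell_mgf: "(\<integral>\<^sup>+\<omega>. ennreal (exp (\<tau> * Z i \<omega>)) \<partial>P) \<le> ennreal (exp (2 * lam * s\<^sup>2 * \<tau>\<^sup>2))"
    if i: "i \<in> E" for i
  proof -
    have "\<bar>c * \<tau>\<bar> \<le> 1 / (4 * s)" using c \<tau>(1,2) by auto
    from Ytilde_mgf_le[OF iE[OF i] j s this]
    have "(\<integral>\<^sup>+\<omega>. ennreal (exp (c * \<tau> * (Ytilde M N W i j \<omega> - lam * M i j))) \<partial>P)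
        \<le> ennreal (exp (2 * lam * s\<^sup>2 * (c * \<tau>)\<^sup>2))"
      unfolding lam_def .
    moreover have "(c * \<tau>)\<^sup>2 = \<tau>\<^sup>2" using c by (auto simp: power2_eq_square)
    ultimately show ?thesis by (simp add: Z_def ac_simps)
  qed
  have "emeasure P {\<omega>\<in>space P. \<rho> * sqrt m \<le> (\<Sum>i\<in>E. Z i \<omega>)}
      \<le> ennreal (exp (real (card E) * (2 * lam * s\<^sup>2 * \<tau>\<^sup>2) - \<tau> * (\<rho> * sqrt m)))"
  proof (rule indep_sum_tail_le[OF fin _ _ less_imp_le[OF \<tau>(1)] cell_mgf])
    show "Z i \<in> borel_measurable P" if "i \<in> E" for i
      using Ytilde_measurable[OF iE[OF that] j] unfolding Z_def by measurable
    show "indep_vars (\<lambda>_. borel) (\<lambda>i \<omega>. ennreal (exp (\<tau> * Z i \<omega>))) E"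
      using indep_vars_exp_Ytilde_column[OF indep_obs E(1) j, of "\<tau> * c" M lam]
      by (simp add: Z_def mult.assoc)
  qed
  also have "\<dots> \<le> ennreal (exp (- L))"
    using \<tau>(3) by (intro ennreal_leI) (simp add: m_def algebra_simps)
  finally have "emeasure P {\<omega>\<in>space P. \<rho> * sqrt m \<le> (\<Sum>i\<in>E. Z i \<omega>)} \<le> ennreal (exp (- L))" .
  moreover have "real (card E) * conf_radius lam \<rho> E = \<rho> * sqrt m"
    using mult_sqrt_divide_self[OF card_pos, of lam]
    by (simp add: conf_radius_def m_def mult.commute mult.left_commute)
  ultimately show ?thesis
    unfolding lam_def[symmetric] by (simp add: Z_def sum_distrib_left emeasure_eq_measure)
qed

definition concentration_event :: "nat set \<Rightarrow> (nat \<Rightarrow> nat set) \<Rightarrow> real \<Rightarrow> 'a set" where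
  "concentration_event T E \<rho> = {\<omega>\<in>space P. \<forall>t\<in>T. \<forall>j<d.
     \<bar>ybar (Ytilde M N W) (E t) j \<omega> - (1 - exp (- \<mu>)) * (\<Sum>i\<in>E t. M i j) / real (card (E t))\<bar>
       < conf_radius (1 - exp (- \<mu>)) \<rho> (E t)}"

lemma concentration_event_measurable:
  assumes "finite T" and "\<And>t. t \<in> T \<Longrightarrow> E t \<subseteq> {..<n}"
  shows "concentration_event T E \<rho> \<in> events"
proof -
  have "Measurable.pred P (\<lambda>\<omega>. \<forall>t\<in>T. \<forall>j\<in>{..<d}. \<bar>ybar (Ytilde M N W) (E t) j \<omega>
      - (1 - exp (- \<mu>)) * (\<Sum>i\<in>E t. M i j) / real (card (E t))\<bar> < conf_radius (1 - exp (- \<mu>)) \<rho> (E t))"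
  proof (intro pred_intros_finite(3))
    fix t j assume "t \<in> T" "j \<in> {..<d}"
    then have [measurable]: "ybar (Ytilde M N W) (E t) j \<in> borel_measurable P"
      using assms by (intro borel_measurable_ybar Ytilde_measurable) auto
    show "Measurable.pred P (\<lambda>\<omega>. \<bar>ybar (Ytilde M N W) (E t) j \<omega>
        - (1 - exp (- \<mu>)) * (\<Sum>i\<in>E t. M i j) / real (card (E t))\<bar> < conf_radius (1 - exp (- \<mu>)) \<rho> (E t))"
      by measurable
  qed (use assms in auto)
  then show ?thesis unfolding concentration_event_def pred_def by (simp only: Ball_def lessThan_iff)
qed

text \<open>Union bound over the \<open>2 |T| d\<close> one-sided deviation events of the blocks.\<close>

lemma uniform_block_concentration:
  assumes T: "finite T" "card T \<le> n" and E: "\<And>t. t \<in> T \<Longrightarrow> E t \<subseteq> {..<n} \<and> E t \<noteq> {}"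
    and L: "0 < L" and \<rho>: "\<rho> = max 1 \<sigma> * exp 1 * sqrt (8 * L)"
    and big: "\<And>t. t \<in> T \<Longrightarrow> 4 * \<rho>\<^sup>2 \<le> (1 - exp (- \<mu>)) * real (card (E t))"
  shows "1 - 2 * real n * real d * exp (- L) \<le> prob (concentration_event T E \<rho>)"
proof -
  define lam where "lam = 1 - exp (- \<mu>)"
  define B where "B = (\<lambda>(t, j, c). {\<omega>\<in>space P. real (card (E t)) * conf_radius lam \<rho> (E t)
      \<le> c * (\<Sum>i\<in>E t. Ytilde M N W i j \<omega> - lam * M i j)})"
  define I where "I = T \<times> {..<d} \<times> {1, -1 :: real}"
  have sum_measurable [measurable]: "(\<lambda>\<omega>. \<Sum>i\<in>E t. Ytilde M N W i j \<omega> - lam * M i j) \<in> borel_measurable P"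
    if "t \<in> T" "j < d" for t j
    using E[OF that(1)] that(2) by (intro borel_measurable_sum borel_measurable_diff Ytilde_measurable) auto
  have "1 - real (card I) * exp (- L) \<le> prob (concentration_event T E \<rho>)"
  proof (rule prob_ge_if_avoiding_bad_events)
    show "finite I" using T by (simp add: I_def)
    show "B x \<in> events" if "x \<in> I" for x
      using that sum_measurable by (auto simp: B_def I_def)
    show "prob (B x) \<le> exp (- L)" if "x \<in> I" for x
      using that E L \<rho> big by (auto simp: B_def I_def lam_def intro!: block_deviation_prob_le)
    show "concentration_event T E \<rho> \<in> events"
      using T E by (intro concentration_event_measurable) auto
    show "space P - (\<Union>x\<in>I. B x) \<subseteq> concentration_event T E \<rho>"
      unfolding concentration_event_def lam_def[symmetric]
    proof safe
      fix \<omega> t j assume \<omega>: "\<omega> \<in> space P" "\<omega> \<notin> (\<Union>x\<in>I. B x)" and t: "t \<in> T" and j: "j < d"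
      then have "\<omega> \<notin> B (t, j, 1)" "\<omega> \<notin> B (t, j, -1)" by (auto simp: I_def)
      then have "\<bar>\<Sum>i\<in>E t. Ytilde M N W i j \<omega> - lam * M i j\<bar> < real (card (E t)) * conf_radius lam \<rho> (E t)"
        using \<omega> by (auto simp: B_def)
      moreover have "0 < card (E t)" using E[OF t] finite_subset by (auto simp: card_gt_0_iff)
      ultimately show "\<bar>ybar (Ytilde M N W) (E t) j \<omega> - lam * (\<Sum>i\<in>E t. M i j) / real (card (E t))\<bar>
             < conf_radius lam \<rho> (E t)"
        by (subst abs_ybar_diff_less_iff[where A="\<lambda>i. M i j"])
    qed
  qed
  moreover have "real (card I) \<le> 2 * real n * real d"
    using T by (simp add: I_def card_cartesian_product mult_right_mono)
  then have "real (card I) * exp (- L) \<le> 2 * real n * real d * exp (- L)"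
    by (intro mult_right_mono) auto
  ultimately show ?thesis by linarith
qed

end

section \<open>Envelopes on the event of concentration\<close>

lemma card_le_2_if_no_increasing_triple:
  fixes C :: "'a::linorder set"
  assumes fin: "finite C"
    and no_triple: "\<And>a b c. a \<in> C \<Longrightarrow> b \<in> C \<Longrightarrow> c \<in> C \<Longrightarrow> a < b \<Longrightarrow> b < c \<Longrightarrow> False"
  shows "card C \<le> 2"
proof (rule ccontr)
  let ?xs = "sorted_list_of_set C"
  assume "\<not> card C \<le> 2"
  then have len: "2 < length ?xs" by simp
  have sorted: "sorted_wrt (<) ?xs" by simp
  have "?xs ! 0 < ?xs ! 1" "?xs ! 1 < ?xs ! 2"
    using sorted_wrt_nth_less[OF sorted] len by auto
  moreover have "?xs ! k \<in> C" if "k \<le> 2" for k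
    using nth_mem[of k ?xs] len that fin by simp
  ultimately show False using no_triple by force
qed

lemma sum_card_le_if_covering_bounded:
  assumes fin: "finite T" "finite D" and sub: "\<And>s. s \<in> T \<Longrightarrow> F s \<subseteq> D"
    and cover: "\<And>j. j \<in> D \<Longrightarrow> card {s\<in>T. j \<in> F s} \<le> k"
  shows "(\<Sum>s\<in>T. card (F s)) \<le> k * card D"
proof -
  have "(\<Sum>s\<in>T. card (F s)) = (\<Sum>s\<in>T. \<Sum>j\<in>D. if j \<in> F s then 1 else 0)"
    using fin sub by (intro sum.cong refl) (simp add: sum.If_cases Int_absorb1)
  also have "\<dots> = (\<Sum>j\<in>D. \<Sum>s\<in>T. if j \<in> F s then 1 else 0)" by (rule sum.swap)
  also have "\<dots> = (\<Sum>j\<in>D. card {s\<in>T. j \<in> F s})"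
    using fin by (intro sum.cong refl) (simp add: sum.If_cases Int_def conj_commute)
  also have "\<dots> \<le> (\<Sum>j\<in>D. k)" by (intro sum_mono cover)
  finally show ?thesis by (simp add: mult.commute)
qed

lemma average_ge_if_all_ge:
  fixes f :: "'i \<Rightarrow> real"
  assumes "finite F" "F \<noteq> {}" "\<And>i. i \<in> F \<Longrightarrow> c \<le> f i"
  shows "c \<le> (\<Sum>i\<in>F. f i) / real (card F)"
  using sum_bounded_below[of F c f] assms by (simp add: pos_le_divide_eq card_gt_0_iff mult.commute)

lemma average_le_if_all_le:
  fixes f :: "'i \<Rightarrow> real"
  assumes "finite F" "F \<noteq> {}" "\<And>i. i \<in> F \<Longrightarrow> f i \<le> c"
  shows "(\<Sum>i\<in>F. f i) / real (card F) \<le> c"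
  using sum_bounded_above[of F f c] assms by (simp add: pos_divide_le_eq card_gt_0_iff mult.commute)

definition prev_active :: "(nat \<Rightarrow> bool) \<Rightarrow> nat \<Rightarrow> nat" where
  "prev_active v s = Max {t. t < s \<and> v t}"

definition next_active :: "nat \<Rightarrow> (nat \<Rightarrow> bool) \<Rightarrow> nat \<Rightarrow> nat" where
  "next_active r v s = Min {t. s < t \<and> t < r \<and> v t}"

lemma mem_envelope_iff:
  "j \<in> envelope d r v E Y lam \<rho> p h s \<omega> \<longleftrightarrow> j < d
     \<and> (s = Min {t. t < r \<and> v t} \<or>
        lam * (p + h) - conf_radius lam \<rho> (E (prev_active v s)) \<le> ybar Y (E (prev_active v s)) j \<omega>)
     \<and> (s = Max {t. t < r \<and> v t} \<or>
        ybar Y (E (next_active r v s)) j \<omega> \<le> lam * (p - h) + conf_radius lam \<rho> (E (next_active r v s)))"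
  by (auto simp: envelope_def Let_def prev_active_def next_active_def conf_radius_def)

lemma prev_active_spec:
  assumes "s < r" "v s" "s \<noteq> Min {t. t < r \<and> v t}"
  shows "prev_active v s < s" "v (prev_active v s)" "\<And>t. t < s \<Longrightarrow> v t \<Longrightarrow> t \<le> prev_active v s"
proof -
  let ?T = "{t. t < r \<and> v t}"
  have "Min ?T \<in> ?T" using assms by (intro Min_in) auto
  moreover have "Min ?T \<le> s" using assms by (intro Min_le) auto
  ultimately have "Min ?T \<in> {t. t < s \<and> v t}" using assms(3) by auto
  then have "prev_active v s \<in> {t. t < s \<and> v t}" unfolding prev_active_def by (intro Max_in) auto
  then show "prev_active v s < s" "v (prev_active v s)" by auto
  show "t \<le> prev_active v s" if "t < s" "v t" for t
    using that unfolding prev_active_def by (intro Max_ge) auto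
qed

lemma next_active_spec:
  assumes "s < r" "v s" "s \<noteq> Max {t. t < r \<and> v t}"
  shows "s < next_active r v s" "next_active r v s < r" "v (next_active r v s)"
    "\<And>t. s < t \<Longrightarrow> t < r \<Longrightarrow> v t \<Longrightarrow> next_active r v s \<le> t"
proof -
  let ?T = "{t. t < r \<and> v t}"
  have "Max ?T \<in> ?T" using assms by (intro Max_in) auto
  moreover have "s \<le> Max ?T" using assms by (intro Max_ge) auto
  ultimately have "Max ?T \<in> {t. s < t \<and> t < r \<and> v t}" using assms(3) by auto
  then have "next_active r v s \<in> {t. s < t \<and> t < r \<and> v t}" unfolding next_active_def by (intro Min_in) auto
  then show "s < next_active r v s" "next_active r v s < r" "v (next_active r v s)" by auto
  show "next_active r v s \<le> t" if "s < t" "t < r" "v t" for t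
    using that unfolding next_active_def by (intro Min_le) auto
qed

lemma conf_radius_le_half_gap:
  fixes lam \<rho> h :: real
  assumes lam: "0 < lam" and \<rho>: "0 \<le> \<rho>" and h: "0 < h" and F: "0 < card F"
    and big: "lam * real (card F) > 4 * \<rho>\<^sup>2 / h\<^sup>2"
  shows "2 * conf_radius lam \<rho> F \<le> lam * h"
proof -
  define c where "c = real (card F)"
  have c: "0 < c" using F by (simp add: c_def)
  have "(2 * conf_radius lam \<rho> F)\<^sup>2 = 4 * \<rho>\<^sup>2 * lam / c"
    using lam c by (simp add: conf_radius_def c_def power_mult_distrib)
  also have "\<dots> \<le> (lam * h)\<^sup>2"
  proof -
    have "4 * \<rho>\<^sup>2 < lam * c * h\<^sup>2" using big h by (simp add: c_def pos_divide_less_eq)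
    then have "4 * \<rho>\<^sup>2 * lam \<le> lam * c * h\<^sup>2 * lam" using lam by (intro mult_right_mono) auto
    also have "\<dots> = (lam * h)\<^sup>2 * c" by (simp add: power2_eq_square algebra_simps)
    finally show ?thesis using c by (simp add: pos_divide_le_eq)
  qed
  finally have "(2 * conf_radius lam \<rho> F)\<^sup>2 \<le> (lam * h)\<^sup>2" .
  moreover have "0 \<le> lam * h" using lam h by simp
  ultimately show ?thesis by (rule power2_le_imp_le)
qed

context
  fixes n d r :: nat and \<pi> \<eta> :: "nat \<Rightarrow> nat" and M :: "nat \<Rightarrow> nat \<Rightarrow> real"
    and E :: "nat \<Rightarrow> nat set" and v :: "nat \<Rightarrow> bool" and lam \<rho> p h :: real
    and Y :: "nat \<Rightarrow> nat \<Rightarrow> 'a \<Rightarrow> real" and \<omega> :: 'a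
  assumes perm: "\<pi> permutes {..<n}" "\<eta> permutes {..<d}" and Mbiso: "M \<in> C_Biso n d \<pi> \<eta>"
    and lam: "0 < lam" and \<rho>: "0 \<le> \<rho>" and h: "0 < h"
    and part_nonempty: "\<And>s. s < r \<Longrightarrow> E s \<noteq> {}"
    and part_union: "(\<Union>s<r. E s) = {..<n}"
    and cond_i: "\<And>s. s < r \<Longrightarrow> v s \<Longrightarrow> lam * real (card (E s)) > 4 * \<rho>\<^sup>2 / h\<^sup>2"
    and cond_ii: "\<And>s s' i i'. s < s' \<Longrightarrow> s' < r \<Longrightarrow> v s \<Longrightarrow> v s' \<Longrightarrow>
                  i \<in> E s \<Longrightarrow> i' \<in> E s' \<Longrightarrow> \<pi> i < \<pi> i'"
    and good: "\<And>t j. t < r \<Longrightarrow> v t \<Longrightarrow> j < d \<Longrightarrow>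
        \<bar>ybar Y (E t) j \<omega> - lam * (\<Sum>i\<in>E t. M i j) / real (card (E t))\<bar> < conf_radius lam \<rho> (E t)"
begin

lemma block_subset_finite_nonempty: "t < r \<Longrightarrow> E t \<subseteq> {..<n} \<and> finite (E t) \<and> E t \<noteq> {}"
  using part_union part_nonempty finite_subset[of "E t" "{..<n}"] by blast

lemma M_antitone_across_blocks:
  assumes "t < t'" "t' < r" "v t" "v t'" "i \<in> E t" "i' \<in> E t'" "j < d"
  shows "M i' j \<le> M i j"
proof -
  have bi: "bi_isotonic n d (\<lambda>a b. M (inv \<pi> a) (inv \<eta> b))" using Mbiso by (simp add: C_Biso_def)
  have "i' < n" using assms block_subset_finite_nonempty by blast
  then have "\<pi> i' < n" "\<eta> j < d" using permutes_in_image[OF perm(1)] permutes_in_image[OF perm(2)] assms by auto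
  moreover have "\<pi> i < \<pi> i'" using cond_ii assms by blast
  ultimately have "M (inv \<pi> (\<pi> i')) (inv \<eta> (\<eta> j)) \<le> M (inv \<pi> (\<pi> i)) (inv \<eta> (\<eta> j))"
    using bi unfolding bi_isotonic_def by (meson less_imp_le)
  then show ?thesis by (simp add: permutes_inverses[OF perm(1)] permutes_inverses[OF perm(2)])
qed

lemma ybar_bounds:
  assumes "t < r" "v t" "j < d"
  shows "lam * (\<Sum>i\<in>E t. M i j) / real (card (E t)) - conf_radius lam \<rho> (E t) < ybar Y (E t) j \<omega>"
    and "ybar Y (E t) j \<omega> < lam * (\<Sum>i\<in>E t. M i j) / real (card (E t)) + conf_radius lam \<rho> (E t)"
  using good[OF assms] by linarith+

lemma conf_radius_le:
  assumes "t < r" "v t"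
  shows "2 * conf_radius lam \<rho> (E t) \<le> lam * h"
  using conf_radius_le_half_gap[OF lam \<rho> h _ cond_i[OF assms]] block_subset_finite_nonempty[OF assms(1)]
  by (simp add: card_gt_0_iff)

lemma Qstar_subset_envelope:
  assumes s: "s < r" "v s"
  shows "Qstar d M p h (E s) \<subseteq> envelope d r v E Y lam \<rho> p h s \<omega>"
proof
  fix j assume "j \<in> Qstar d M p h (E s)"
  then have j: "j < d" and max: "p + h \<le> Max ((\<lambda>i. M i j) ` E s)" and min: "Min ((\<lambda>i. M i j) ` E s) \<le> p - h"
    by (auto simp: Qstar_def)
  have fin: "finite ((\<lambda>i. M i j) ` E s)" "(\<lambda>i. M i j) ` E s \<noteq> {}" using block_subset_finite_nonempty[OF s(1)] by auto
  obtain i0 where i0: "i0 \<in> E s" "p + h \<le> M i0 j" using Max_in[OF fin] max by auto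
  obtain i1 where i1: "i1 \<in> E s" "M i1 j \<le> p - h" using Min_in[OF fin] min by auto
  have "lam * (p + h) - conf_radius lam \<rho> (E u) \<le> ybar Y (E u) j \<omega>"
    if "u < s" "v u" for u
  proof -
    have "p + h \<le> (\<Sum>i\<in>E u. M i j) / real (card (E u))"
      using block_subset_finite_nonempty[of u] that s i0 M_antitone_across_blocks[OF that(1) s(1) that(2) s(2) _ i0(1) j]
      by (intro average_ge_if_all_ge) force+
    then show ?thesis
      using ybar_bounds(1)[of u j] that s j lam by (simp add: mult_left_mono) (smt (verit) mult_left_mono times_divide_eq_right)
  qed
  moreover have "ybar Y (E u) j \<omega> \<le> lam * (p - h) + conf_radius lam \<rho> (E u)"
    if "s < u" "u < r" "v u" for u
  proof -
    have "(\<Sum>i\<in>E u. M i j) / real (card (E u)) \<le> p - h"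
      using block_subset_finite_nonempty[of u] that s i1 M_antitone_across_blocks[OF that(1) that(2) s(2) that(3) i1(1) _ j]
      by (intro average_le_if_all_le) force+
    then show ?thesis
      using ybar_bounds(2)[of u j] that j lam by (smt (verit) mult_left_mono times_divide_eq_right)
  qed
  ultimately show "j \<in> envelope d r v E Y lam \<rho> p h s \<omega>"
    unfolding mem_envelope_iff using j s prev_active_spec[of s r v] next_active_spec[of s r v] by blast
qed

lemma block_average_lt_if_ybar_le:
  assumes "u < r" "v u" "j < d" "ybar Y (E u) j \<omega> \<le> lam * (p - h) + conf_radius lam \<rho> (E u)"
  shows "(\<Sum>i\<in>E u. M i j) / real (card (E u)) < p"
proof -
  have "lam * (p - h) = lam * p - lam * h" by (simp add: algebra_simps)
  then have "lam * (\<Sum>i\<in>E u. M i j) / real (card (E u)) < lam * p"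
    using ybar_bounds(1)[of u j] conf_radius_le[of u] assms by linarith
  then show ?thesis
    using lam by (simp add: mult_less_cancel_left_pos times_divide_eq_right[symmetric] del: times_divide_eq_right)
qed

lemma block_average_gt_if_ybar_ge:
  assumes "w < r" "v w" "j < d" "lam * (p + h) - conf_radius lam \<rho> (E w) \<le> ybar Y (E w) j \<omega>"
  shows "p < (\<Sum>i\<in>E w. M i j) / real (card (E w))"
proof -
  have "lam * (p + h) = lam * p + lam * h" by (simp add: algebra_simps)
  then have "lam * p < lam * (\<Sum>i\<in>E w. M i j) / real (card (E w))"
    using ybar_bounds(2)[of w j] conf_radius_le[of w] assms by linarith
  then show ?thesis
    using lam by (simp add: mult_less_cancel_left_pos times_divide_eq_right[symmetric] del: times_divide_eq_right)
qed

lemma card_envelopes_containing_le_2: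
  assumes j: "j < d"
  shows "card {s. s < r \<and> v s \<and> j \<in> envelope d r v E Y lam \<rho> p h s \<omega>} \<le> 2"
proof (rule card_le_2_if_no_increasing_triple)
  show "finite {s. s < r \<and> v s \<and> j \<in> envelope d r v E Y lam \<rho> p h s \<omega>}" by simp
next
  fix a b c
  assume "a \<in> {s. s < r \<and> v s \<and> j \<in> envelope d r v E Y lam \<rho> p h s \<omega>}"
    "b \<in> {s. s < r \<and> v s \<and> j \<in> envelope d r v E Y lam \<rho> p h s \<omega>}"
    "c \<in> {s. s < r \<and> v s \<and> j \<in> envelope d r v E Y lam \<rho> p h s \<omega>}" and ab: "a < b" and bc: "b < c"
  then have a: "a < r" "v a" "j \<in> envelope d r v E Y lam \<rho> p h a \<omega>" and b: "b < r" "v b"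
    and c: "c < r" "v c" "j \<in> envelope d r v E Y lam \<rho> p h c \<omega>" by auto
  have a_not_last: "a \<noteq> Max {t. t < r \<and> v t}" using ab b by (metis (mono_tags) Max_ge finite_Collect_conjI
      finite_Collect_less_nat leD mem_Collect_eq)
  have c_not_first: "c \<noteq> Min {t. t < r \<and> v t}" using bc b by (metis (mono_tags) Min_le finite_Collect_conjI
      finite_Collect_less_nat leD mem_Collect_eq)
  define u where "u = next_active r v a"
  define w where "w = prev_active v c"
  note u = next_active_spec[OF a(1,2) a_not_last, folded u_def]
  note w = prev_active_spec[OF c(1,2) c_not_first, folded w_def]
  have "u \<le> w" using u(4)[OF ab b] w(3)[OF bc b(2)] by simp
  have w_r: "w < r" using w(1) c(1) by simp
  have below: "(\<Sum>i\<in>E u. M i j) / real (card (E u)) < p"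
    using a(3) a_not_last u j by (intro block_average_lt_if_ybar_le) (auto simp: mem_envelope_iff u_def)
  have above: "p < (\<Sum>i\<in>E w. M i j) / real (card (E w))"
    using c(3) c_not_first w w_r j by (intro block_average_gt_if_ybar_ge) (auto simp: mem_envelope_iff w_def)
  show False
  proof (cases "u = w")
    case True
    then show False using below above by simp
  next
    case False
    with \<open>u \<le> w\<close> have "u < w" by simp
    obtain i where i: "i \<in> E u" "M i j < p"
      using below average_ge_if_all_ge[of "E u" p "\<lambda>i. M i j"] block_subset_finite_nonempty[OF u(2)] by force
    obtain i' where i': "i' \<in> E w" "p < M i' j"
      using above average_le_if_all_le[of "E w" "\<lambda>i. M i j" p] block_subset_finite_nonempty[OF w_r] by force
    have "M i' j \<le> M i j" using M_antitone_across_blocks[OF \<open>u < w\<close> w_r u(3) w(2) i(1) i'(1) j] .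
    then show False using i i' by simp
  qed
qed

lemma sum_card_envelope_le:
  "(\<Sum>s\<in>{s. s < r \<and> v s}. card (envelope d r v E Y lam \<rho> p h s \<omega>)) \<le> 2 * d"
proof -
  have "(\<Sum>s\<in>{s. s < r \<and> v s}. card (envelope d r v E Y lam \<rho> p h s \<omega>)) \<le> 2 * card {..<d}"
  proof (rule sum_card_le_if_covering_bounded)
    show "envelope d r v E Y lam \<rho> p h s \<omega> \<subseteq> {..<d}" for s by (auto simp: mem_envelope_iff)
    show "card {s \<in> {s. s < r \<and> v s}. j \<in> envelope d r v E Y lam \<rho> p h s \<omega>} \<le> 2" if "j \<in> {..<d}" for j
      using card_envelopes_containing_le_2[of j] that by (simp add: conj_assoc)
  qed auto
  then show ?thesis by simp
qed

end

lemma (in poisson_observation_model) concentration_event_subset_envelope_event: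
  assumes perm: "\<pi> permutes {..<n}" "\<eta> permutes {..<d}" and Mbiso: "M \<in> C_Biso n d \<pi> \<eta>"
    and \<rho>: "0 \<le> \<rho>" and h: "0 < h"
    and part_nonempty: "\<And>s. s < r \<Longrightarrow> E s \<noteq> {}"
    and part_union: "(\<Union>s<r. E s) = {..<n}"
    and cond_i: "\<And>s. s < r \<Longrightarrow> v s \<Longrightarrow> (1 - exp (- \<mu>)) * real (card (E s)) > 4 * \<rho>\<^sup>2 / h\<^sup>2"
    and cond_ii: "\<And>s s' i i'. s < s' \<Longrightarrow> s' < r \<Longrightarrow> v s \<Longrightarrow> v s' \<Longrightarrow>
                  i \<in> E s \<Longrightarrow> i' \<in> E s' \<Longrightarrow> \<pi> i < \<pi> i'"
  shows "concentration_event {s. s < r \<and> v s} E \<rho> \<subseteq> {\<omega> \<in> space P.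
      (\<Sum>s\<in>{s. s < r \<and> v s}. card (envelope d r v E (Ytilde M N W) (1 - exp (- \<mu>)) \<rho> p h s \<omega>)) \<le> 2 * d \<and>
      (\<forall>s. s < r \<and> v s \<longrightarrow>
         Qstar d M p h (E s) \<subseteq> envelope d r v E (Ytilde M N W) (1 - exp (- \<mu>)) \<rho> p h s \<omega>)}"
proof
  fix \<omega> assume \<omega>: "\<omega> \<in> concentration_event {s. s < r \<and> v s} E \<rho>"
  have good: "\<bar>ybar (Ytilde M N W) (E t) j \<omega> - (1 - exp (- \<mu>)) * (\<Sum>i\<in>E t. M i j) / real (card (E t))\<bar>
      < conf_radius (1 - exp (- \<mu>)) \<rho> (E t)" if "t < r" "v t" "j < d" for t j
    using \<omega> that by (auto simp: concentration_event_def)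
  have "0 < 1 - exp (- \<mu>)" using mu by simp
  note context_facts = perm Mbiso this \<rho> h part_nonempty part_union cond_i cond_ii good
  have "(\<Sum>s\<in>{s. s < r \<and> v s}. card (envelope d r v E (Ytilde M N W) (1 - exp (- \<mu>)) \<rho> p h s \<omega>))
      \<le> 2 * d"
    by (rule sum_card_envelope_le[OF context_facts])
  moreover have "\<forall>s. s < r \<and> v s \<longrightarrow>
      Qstar d M p h (E s) \<subseteq> envelope d r v E (Ytilde M N W) (1 - exp (- \<mu>)) \<rho> p h s \<omega>"
    by (intro allI impI Qstar_subset_envelope[OF context_facts]) auto
  moreover have "\<omega> \<in> space P" using \<omega> by (simp add: concentration_event_def)
  ultimately show "\<omega> \<in> {\<omega> \<in> space P.
      (\<Sum>s\<in>{s. s < r \<and> v s}. card (envelope d r v E (Ytilde M N W) (1 - exp (- \<mu>)) \<rho> p h s \<omega>)) \<le> 2 * d \<and>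
      (\<forall>s. s < r \<and> v s \<longrightarrow>
         Qstar d M p h (E s) \<subseteq> envelope d r v E (Ytilde M N W) (1 - exp (- \<mu>)) \<rho> p h s \<omega>)}"
    by blast
qed

section \<open>Measurability of the envelope event\<close>

lemma pred_mem_envelope:
  assumes Ym: "\<And>i j. i < n \<Longrightarrow> j < d \<Longrightarrow> Y i j \<in> borel_measurable M"
    and Esub: "\<And>t. t < r \<Longrightarrow> E t \<subseteq> {..<n}" and s: "s < r" "v s"
  shows "Measurable.pred M (\<lambda>\<omega>. j \<in> envelope d r v E Y lam \<rho> p h s \<omega>)"
proof (cases "j < d")
  case True
  have ybar_meas: "ybar Y (E t) j \<in> borel_measurable M" if "t < r" for t
    using Esub[OF that] Ym True by (intro borel_measurable_ybar) auto
  have lower: "Measurable.pred M (\<lambda>\<omega>. s = Min {t. t < r \<and> v t} \<or>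
      lam * (p + h) - conf_radius lam \<rho> (E (prev_active v s)) \<le> ybar Y (E (prev_active v s)) j \<omega>)"
  proof (cases "s = Min {t. t < r \<and> v t}")
    case False
    then have [measurable]: "ybar Y (E (prev_active v s)) j \<in> borel_measurable M"
      using prev_active_spec(1)[OF s False] s by (intro ybar_meas) simp
    show ?thesis by measurable
  qed simp
  have upper: "Measurable.pred M (\<lambda>\<omega>. s = Max {t. t < r \<and> v t} \<or>
      ybar Y (E (next_active r v s)) j \<omega> \<le> lam * (p - h) + conf_radius lam \<rho> (E (next_active r v s)))"
  proof (cases "s = Max {t. t < r \<and> v t}")
    case False
    then have [measurable]: "ybar Y (E (next_active r v s)) j \<in> borel_measurable M"
      using next_active_spec(2)[OF s False] by (intro ybar_meas)
    show ?thesis by measurable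
  qed simp
  show ?thesis unfolding mem_envelope_iff using lower upper True by measurable
qed (simp add: mem_envelope_iff)

lemma real_card_eq_sum_indicator:
  assumes "A \<subseteq> B" "finite B"
  shows "real (card A) = (\<Sum>j\<in>B. if j \<in> A then 1 else 0)"
proof -
  have "(\<Sum>j\<in>B. if j \<in> A then 1 else (0::real)) = (\<Sum>j\<in>B \<inter> A. 1)"
    using assms by (intro sum.inter_restrict[symmetric]) auto
  also have "B \<inter> A = A" using assms by auto
  finally show ?thesis by simp
qed

lemma envelope_event_measurable:
  assumes Ym: "\<And>i j. i < n \<Longrightarrow> j < d \<Longrightarrow> Y i j \<in> borel_measurable M"
    and Esub: "\<And>t. t < r \<Longrightarrow> E t \<subseteq> {..<n}"
  shows "{\<omega> \<in> space M. (\<Sum>s\<in>{s. s < r \<and> v s}. card (envelope d r v E Y lam \<rho> p h s \<omega>)) \<le> k \<and>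
            (\<forall>s. s < r \<and> v s \<longrightarrow> Qstar d M' p h (E s) \<subseteq> envelope d r v E Y lam \<rho> p h s \<omega>)} \<in> sets M"
proof -
  let ?T = "{s. s < r \<and> v s}"
  let ?env = "\<lambda>s \<omega>. envelope d r v E Y lam \<rho> p h s \<omega>"
  note pred_env = pred_mem_envelope[OF Ym Esub]
  define f where "f \<omega> = (\<Sum>s\<in>?T. \<Sum>j<d. if j \<in> ?env s \<omega> then 1 else (0::real))" for \<omega>
  have f_eq: "real (\<Sum>s\<in>?T. card (?env s \<omega>)) = f \<omega>" for \<omega>
    unfolding f_def of_nat_sum
    by (intro sum.cong refl real_card_eq_sum_indicator) (auto simp: mem_envelope_iff)
  have [measurable]: "f \<in> borel_measurable M"
    unfolding f_def
  proof (intro borel_measurable_sum)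
    fix s j assume "s \<in> ?T"
    then show "(\<lambda>\<omega>. if j \<in> ?env s \<omega> then 1 else (0::real)) \<in> borel_measurable M"
      using pred_env[where s=s and j=j] by (intro measurable_If) (auto simp: pred_def)
  qed
  have [measurable]: "Measurable.pred M (\<lambda>\<omega>. \<forall>s\<in>?T. \<forall>j\<in>Qstar d M' p h (E s). j \<in> ?env s \<omega>)"
    by (intro pred_intros_countable_bounded(3)) (auto simp: Qstar_def pred_env)
  have "(\<Sum>s\<in>?T. card (?env s \<omega>)) \<le> k \<longleftrightarrow> f \<omega> \<le> real k" for \<omega>
    by (metis f_eq of_nat_le_iff)
  then have "{\<omega> \<in> space M. (\<Sum>s\<in>?T. card (?env s \<omega>)) \<le> k \<and>
            (\<forall>s. s \<in> ?T \<longrightarrow> Qstar d M' p h (E s) \<subseteq> ?env s \<omega>)}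
      = {\<omega> \<in> space M. f \<omega> \<le> real k \<and> (\<forall>s\<in>?T. \<forall>j\<in>Qstar d M' p h (E s). j \<in> ?env s \<omega>)}"
    by auto
  also have "\<dots> \<in> sets M" by measurable
  finally show ?thesis by simp
qed

theorem mainTheorem7:
  fixes P :: "'a measure"
    and n d r :: nat
    and \<pi> \<eta> :: "nat \<Rightarrow> nat"
    and M :: "nat \<Rightarrow> nat \<Rightarrow> real"
    and p h \<sigma> \<delta> \<mu> :: real
    and N :: "nat \<Rightarrow> nat \<Rightarrow> 'a \<Rightarrow> nat"
    and W :: "nat \<Rightarrow> nat \<Rightarrow> nat \<Rightarrow> 'a \<Rightarrow> real"
    and E :: "nat \<Rightarrow> nat set"
    and v :: "nat \<Rightarrow> bool"
  assumes P: "prob_space P"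
    and nd: "1 \<le> n" "1 \<le> d" "2 \<le> max n d"
    and perm: "\<pi> permutes {..<n}" "\<eta> permutes {..<d}"
    and Mbiso: "M \<in> C_Biso n d \<pi> \<eta>"
    and ph: "0 \<le> p" "p \<le> 1" "0 < h" "h \<le> 1"
    and sig: "0 < \<sigma>"
    and del: "0 < \<delta>" "\<delta> < 1"
    and mu: "0 < \<mu>"
    and N_meas: "\<And>i j. i < n \<Longrightarrow> j < d \<Longrightarrow> N i j \<in> measurable P (count_space UNIV)"
    and N_pois: "\<And>i j. i < n \<Longrightarrow> j < d \<Longrightarrow>
                  distr P (count_space UNIV) (N i j) = measure_pmf (poisson_pmf \<mu>)"
    and W_meas: "\<And>i j k. i < n \<Longrightarrow> j < d \<Longrightarrow> W i j k \<in> borel_measurable P"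
    and W_centered: "\<And>i j k. i < n \<Longrightarrow> j < d \<Longrightarrow> prob_space.expectation P (W i j k) = 0"
    and W_mgf_int: "\<And>i j k t. i < n \<Longrightarrow> j < d \<Longrightarrow> integrable P (\<lambda>\<omega>. exp (t * W i j k \<omega>))"
    and W_subg: "\<And>i j k t. i < n \<Longrightarrow> j < d \<Longrightarrow>
                  prob_space.expectation P (\<lambda>\<omega>. exp (t * W i j k \<omega>)) \<le> exp (t\<^sup>2 * \<sigma>\<^sup>2 / 2)"
    and indep: "prob_space.indep_vars P (\<lambda>_. borel)
                  (\<lambda>x \<omega>. case x of Inl (i, j) \<Rightarrow> real (N i j \<omega>) | Inr (i, j, k) \<Rightarrow> W i j k \<omega>)
                  ({Inl (i, j) | i j. i < n \<and> j < d} \<union> {Inr (i, j, k) | i j k. i < n \<and> j < d})"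
    and part_nonempty: "\<And>s. s < r \<Longrightarrow> E s \<noteq> {}"
    and part_disj: "\<And>s s'. s < r \<Longrightarrow> s' < r \<Longrightarrow> s \<noteq> s' \<Longrightarrow> E s \<inter> E s' = {}"
    and part_union: "(\<Union>s<r. E s) = {..<n}"
    and cond_i: "\<And>s. s < r \<Longrightarrow> v s \<Longrightarrow>
                  (1 - exp (- \<mu>)) * real (card (E s)) > 4 * (rho_const \<sigma> n d \<delta>)\<^sup>2 / h\<^sup>2"
    and cond_ii: "\<And>s s' i i'. s < s' \<Longrightarrow> s' < r \<Longrightarrow> v s \<Longrightarrow> v s' \<Longrightarrow>
                  i \<in> E s \<Longrightarrow> i' \<in> E s' \<Longrightarrow> \<pi> i < \<pi> i'"
  shows "measure P {\<omega> \<in> space P.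
            (\<Sum>s\<in>{s. s < r \<and> v s}.
               card (envelope d r v E (Ytilde M N W) (1 - exp (- \<mu>)) (rho_const \<sigma> n d \<delta>) p h s \<omega>))
              \<le> 3 * d \<and>
            (\<forall>s. s < r \<and> v s \<longrightarrow>
               Qstar d M p h (E s) \<subseteq>
                 envelope d r v E (Ytilde M N W) (1 - exp (- \<mu>)) (rho_const \<sigma> n d \<delta>) p h s \<omega>)}
         \<ge> 1 - \<delta> / (12 * real_of_int \<lceil>log 2 (real (max n d))\<rceil> * sqrt (real (max n d)))"
proof -
  interpret poisson_observation_model P n d M N W \<mu> \<sigma>
  proof (intro poisson_observation_model.intro poisson_observation_model_axioms.intro
      P sig mu N_meas N_pois W_meas W_mgf_int W_subg)
    show "\<And>i j. i < n \<Longrightarrow> j < d \<Longrightarrow> 0 \<le> M i j \<and> M i j \<le> 1"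
      using Mbiso by (simp add: C_Biso_def)
    show "prob_space.indep_vars P (\<lambda>_. borel) (observation N W) (observation_index n d)"
      using indep by (simp add: observation_def observation_index_def)
  qed
  define lam where "lam = 1 - exp (- \<mu>)"
  define \<rho> where "\<rho> = rho_const \<sigma> n d \<delta>"
  define L where "L = Lconst n d \<delta>"
  define T where "T = {s. s < r \<and> v s}"
  let ?Target = "{\<omega> \<in> space P.
      (\<Sum>s\<in>T. card (envelope d r v E (Ytilde M N W) lam \<rho> p h s \<omega>)) \<le> 3 * d \<and>
      (\<forall>s. s < r \<and> v s \<longrightarrow> Qstar d M p h (E s) \<subseteq> envelope d r v E (Ytilde M N W) lam \<rho> p h s \<omega>)}"
  have L: "0 < L" using Lconst_pos_and_exp(1)[OF nd del] by (simp add: L_def)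
  have \<rho>: "\<rho> = max 1 \<sigma> * exp 1 * sqrt (8 * L)" by (simp add: \<rho>_def rho_const_def L_def)
  have blocks: "E t \<subseteq> {..<n} \<and> E t \<noteq> {}" if "t < r" for t
    using part_union part_nonempty[OF that] that by blast
  have "4 * \<rho>\<^sup>2 \<le> 4 * \<rho>\<^sup>2 / h\<^sup>2" using ph(3,4) by (simp add: le_divide_eq mult_left_le power_le_one)
  then have big: "4 * \<rho>\<^sup>2 \<le> lam * real (card (E t))" if "t \<in> T" for t
    using cond_i that by (fastforce simp: T_def lam_def \<rho>_def)
  have "card T \<le> card {..<r}" by (intro card_mono) (auto simp: T_def)
  then have "card T \<le> n" using card_partition_le[OF part_nonempty part_disj part_union] by simp
  then have "1 - 2 * real n * real d * exp (- L) \<le> prob (concentration_event T E \<rho>)"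
    using blocks big L \<rho> by (intro uniform_block_concentration[folded lam_def]) (auto simp: T_def)
  also have "\<dots> \<le> prob ?Target"
  proof (rule finite_measure_mono)
    show "?Target \<in> events"
      unfolding T_def using blocks by (intro envelope_event_measurable Ytilde_measurable) auto
    have "0 \<le> \<rho>" using L by (simp add: \<rho>)
    have "concentration_event T E \<rho> \<subseteq> {\<omega> \<in> space P.
        (\<Sum>s\<in>T. card (envelope d r v E (Ytilde M N W) lam \<rho> p h s \<omega>)) \<le> 2 * d \<and>
        (\<forall>s. s < r \<and> v s \<longrightarrow> Qstar d M p h (E s) \<subseteq> envelope d r v E (Ytilde M N W) lam \<rho> p h s \<omega>)}"
      unfolding T_def lam_def
      by (rule concentration_event_subset_envelope_event[OF perm Mbiso \<open>0 \<le> \<rho>\<close> ph(3) part_nonempty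
            part_union cond_i[folded \<rho>_def] cond_ii])
    also have "\<dots> \<subseteq> ?Target" by (intro Collect_mono) auto
    finally show "concentration_event T E \<rho> \<subseteq> ?Target" .
  qed
  finally show ?thesis
    unfolding Lconst_pos_and_exp(2)[OF nd del, folded L_def] T_def lam_def \<rho>_def .
qed

end
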